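(* Let $\alpha>0$, $\varkappa^{\pm}\in\mathbb{R}$, $M>0$, and let $g$ be a smooth diffeomorphism of $\mathbb{R}$ with $g(x)=x+\varkappa^{-}$ for $x\le -M$ and $g(x)=x+\varkappa^{+}$ for $x\ge M$. Let $G_\Xi(x)=G^{(\mathrm c)}_\Xi(x)+\mathcal{G}_\Xi(x)-\mathcal{G}_\Xi(g(x)-\mathrm{i}\alpha)$, where $G^{(\mathrm c)}_\Xi$ is smooth with support in $[-M,M]$, and $\mathcal{G}_\Xi$ is smooth on $\overline{\mathcal{S}_\alpha}$, holomorphic on $\mathcal{S}_\alpha\cap\{|\mathrm{Re}(z)|>M/2\}$, and satisfies, for some $\varrho>0$, $\mathcal{G}_\Xi(z)=\mathrm{O}(e^{\mp\varrho z})$ as $\mathrm{Re}(z)\to\pm\infty$ uniformly on $\overline{\mathcal{S}_\alpha}\cap\{|\mathrm{Re}(z)|>M/2\}$. Let $\Xi$ be holomorphic on $\mathcal{S}_\alpha$ with boundary values $\Xi_-$ on $\mathbb{R}$ and $\Xi_+$ on $\mathbb{R}-\mathrm{i}\alpha$ such that $x\mapsto\Xi_+(g(x)-\mathrm{i}\alpha)$ and $x\mapsto \Xi_-(x)$ are in $L^2_{\mathrm{loc}}(\mathbb{R})$, $\Xi_+(g(x)-\mathrm{i}\alpha)=\Xi_-(x)+G_\Xi(x)$ for $x\in\mathbb{R}$, and for some constants $C_\Xi,C_{-1}$, $\Xi(z)=C_\Xi\delta_{\pm,-}+C_{-1}/z+\mathrm{O}(z^{-2})$ as $\mathrm{Re}(z)\to\pm\infty$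 uniformly up to the boundary of $\mathcal{S}_\alpha$. Then, uniformly up to the boundary, $$\Xi(z)=C_\Xi\,\delta_{\pm,-}-\mathcal{G}_\Xi(z)+\mathrm{O}\Big(e^{\mp\frac{2\pi}{\alpha}\widetilde\gamma_\pm z}\Big)\quad\text{as }\mathrm{Re}(z)\to\pm\infty,\qquad \widetilde\gamma_\pm=\frac{-\mathrm{i}\alpha}{-\mathrm{i}\alpha+\varkappa^{\pm}}.$$
   Context: $\mathcal{S}_{\alpha}=\{z\in\mathbb{C}:-\alpha<\mathrm{Im}(z)<0\}$; boundary values are limits from inside $\mathcal{S}_\alpha$. $\delta_{\pm,-}$ is $1$ for $\mathrm{Re}(z)\to-\infty$ and $0$ for $\mathrm{Re}(z)\to+\infty$. $\mathrm{O}$ of an exponential bounds the modulus by a constant times the modulus of the exponential. *)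

theory Defs
  imports "HOL-Complex_Analysis.Complex_Analysis"
begin

definition strip :: "real \<Rightarrow> complex set" where
  "strip \<alpha> = {z. - \<alpha> < Im z \<and> Im z < 0}"

coinductive smooth_on :: "'a::real_normed_vector set \<Rightarrow> ('a \<Rightarrow> 'b::real_normed_vector) \<Rightarrow> bool"
  where
  "\<lbrakk> \<forall>x\<in>U. (f has_derivative f' x) (at x);
     \<forall>v. smooth_on U (\<lambda>x. f' x v) \<rbrakk> \<Longrightarrow> smooth_on U f"

definition smooth_upto :: "'a::real_normed_vector set \<Rightarrow> ('a \<Rightarrow> 'b::real_normed_vector) \<Rightarrow> bool" where
  "smooth_upto A f \<longleftrightarrow> (\<exists>U h. open U \<and> A \<subseteq> U \<and> smooth_on U h \<and> (\<forall>x\<in>A. h x = f x))"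

definition smooth_diffeo :: "(real \<Rightarrow> real) \<Rightarrow> bool" where
  "smooth_diffeo g \<longleftrightarrow> bij g \<and> smooth_on UNIV g \<and> smooth_on UNIV (inv g)"

definition L2_loc :: "(real \<Rightarrow> complex) \<Rightarrow> bool" where
  "L2_loc f \<longleftrightarrow> (\<forall>a b. f measurable_on {a..b} \<and> (\<lambda>x. (cmod (f x))\<^sup>2) integrable_on {a..b})"

end

theory Submission
  imports Defs
begin

text \<open>
  Far to the right the jump relation says that \<open>H = \<Xi> + \<G>\<close> has boundary values on the
  two edges of the strip that are glued by the translation \<open>p = \<kappa>\<^sup>+ - \<i>\<alpha>\<close>:
  \<open>H(x - \<i>\<alpha>) = H(x - \<kappa>\<^sup>+)\<close>. Cauchy's formula on a long rectangle inside the strip,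
  with the \<open>p\<close>-periodic kernel \<open>c / (exp (c (w - z)) - 1)\<close>, \<open>c = 2\<pi>\<i> / p\<close>, whose only pole
  in the strip is \<open>w = z\<close> with residue 1, makes the two horizontal edges cancel up to their
  ends, because the kernel takes the same values on the upper edge and on the lower edge shifted
  by \<open>\<kappa>\<^sup>+\<close>. Near the right side \<open>H\<close> is small and the kernel bounded; near the left side
  \<open>H\<close> is bounded and the kernel is \<open>O(|exp (c z)|)\<close>. Hence \<open>H(z) = O(|exp (c z)|)\<close>, and
  \<open>c = - (2\<pi>/\<alpha>) \<gamma>\<^sup>+\<close>. The left end is the right end of the problem reflected by
  \<open>w \<mapsto> - w - \<i>\<alpha>\<close>, which exchanges the two edges and the two ends of the strip.
\<close>

section \<open>The periodic Cauchy kernel\<close>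

definition periodic_kernel :: "complex \<Rightarrow> complex \<Rightarrow> complex" where
  "periodic_kernel p u = (2 * pi * \<i> / p) / (exp (2 * pi * \<i> / p * u) - 1)"

lemma exp_periodic_eq_1_imp_multiple:
  assumes "p \<noteq> 0" and "exp (2 * pi * \<i> / p * u) = 1"
  obtains n :: int where "u = of_int n * p"
proof -
  obtain n :: int where "Re (2 * pi * \<i> / p * u) = 0" "Im (2 * pi * \<i> / p * u) = of_int (2 * n) * pi"
    using assms(2) exp_eq_1 by blast
  then have "2 * pi * \<i> / p * u = of_int n * (2 * pi * \<i>)"
    by (simp add: complex_eq_iff)
  then have "u = of_int n * p"
    using assms(1) by (simp add: field_simps)
  then show thesis ..
qed

lemma exp_periodic_ne_1:
  assumes "\<bar>Im u\<bar> < \<bar>Im p\<bar>" and "u \<noteq> 0"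
  shows "exp (2 * pi * \<i> / p * u) \<noteq> 1"
proof
  assume "exp (2 * pi * \<i> / p * u) = 1"
  moreover have "p \<noteq> 0"
    using assms(1) by auto
  ultimately obtain n :: int where n: "u = of_int n * p"
    using exp_periodic_eq_1_imp_multiple by blast
  then have "\<bar>of_int n\<bar> * \<bar>Im p\<bar> < 1 * \<bar>Im p\<bar>"
    using assms(1) by (simp add: abs_mult)
  then have "\<bar>of_int n\<bar> < (1::real)"
    by (simp add: mult_less_cancel_right2)
  then have "n = 0"
    by linarith
  with n assms(2) show False
    by simp
qed

lemma periodic_kernel_add_period:
  assumes "p \<noteq> 0"
  shows "periodic_kernel p (u + p) = periodic_kernel p u"
proof -
  have "2 * pi * \<i> / p * (u + p) = 2 * pi * \<i> / p * u + 2 * pi * \<i>"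
    using assms by (simp add: field_simps)
  then show ?thesis
    by (simp add: periodic_kernel_def exp_add)
qed

lemma norm_divide_exp_minus_1_le_exp:
  fixes c v :: complex
  assumes "ln 2 \<le> Re v"
  shows "cmod (c / (exp v - 1)) \<le> 2 * cmod c * exp (- Re v)"
proof -
  have "2 \<le> cmod (exp v)"
    using assms by (metis exp_ln exp_le_cancel_iff norm_exp_eq_Re zero_less_numeral)
  moreover have "cmod (exp v) - 1 \<le> cmod (exp v - 1)"
    by (metis norm_one norm_triangle_ineq2)
  ultimately have le: "cmod (exp v) / 2 \<le> cmod (exp v - 1)"
    by linarith
  moreover have "0 < cmod (exp v) / 2"
    by simp
  ultimately have "0 < cmod (exp v - 1)"
    by linarith
  then have "cmod c / cmod (exp v - 1) \<le> cmod c / (cmod (exp v) / 2)"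
    by (intro divide_left_mono le) auto
  also have "\<dots> = 2 * cmod c * exp (- Re v)"
    by (simp add: exp_minus field_simps)
  finally show ?thesis
    by (simp add: norm_divide)
qed

lemma norm_divide_exp_minus_1_le:
  fixes c v :: complex
  assumes "Re v \<le> - ln 2"
  shows "cmod (c / (exp v - 1)) \<le> 2 * cmod c"
proof -
  have "cmod (exp v) \<le> 1 / 2"
    using assms by (metis exp_ln exp_le_cancel_iff exp_minus inverse_eq_divide norm_exp_eq_Re zero_less_numeral)
  moreover have "1 - cmod (exp v) \<le> cmod (exp v - 1)"
    by (metis norm_minus_commute norm_one norm_triangle_ineq2)
  ultimately have "1 / 2 \<le> cmod (exp v - 1)"
    by linarith
  then have "cmod c / cmod (exp v - 1) \<le> cmod c / (1 / 2)"
    by (intro divide_left_mono) auto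
  then show ?thesis
    by (simp add: norm_divide)
qed

lemma Re_periodic_frequency:
  "Re (2 * pi * \<i> / p * u) = 2 * pi * (Im p * Re u - Re p * Im u) / (cmod p)\<^sup>2"
  by (simp add: Re_divide Im_divide cmod_power2 field_simps)

lemma periodic_kernel_decay:
  assumes "Im p < 0"
  obtains L where "L > 0"
    and "\<And>u. \<bar>Im u\<bar> \<le> - Im p \<Longrightarrow> L \<le> Re u \<Longrightarrow>
           cmod (periodic_kernel p u) \<le> 2 * cmod (2 * pi * \<i> / p)"
    and "\<And>u. \<bar>Im u\<bar> \<le> - Im p \<Longrightarrow> Re u \<le> - L \<Longrightarrow>
           cmod (periodic_kernel p u) \<le> 2 * cmod (2 * pi * \<i> / p) * exp (- Re (2 * pi * \<i> / p * u))"
proof -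
  define a where "a = - Im p"
  define n where "n = (cmod p)\<^sup>2"
  define L where "L = \<bar>Re p\<bar> + n * ln 2 / (2 * pi * a) + 1"
  have a: "a > 0" and n: "n > 0"
    using assms by (auto simp: a_def n_def)
  have L: "L > 0"
    using a n by (simp add: L_def add_nonneg_pos)
  have aL: "a * L = a * \<bar>Re p\<bar> + n * ln 2 / (2 * pi) + a"
    using a by (simp add: L_def field_simps)
  have Re_cu: "Re (2 * pi * \<i> / p * u) = 2 * pi * (- (a * Re u) - Re p * Im u) / n" for u
    using Re_periodic_frequency[of p u] by (simp add: a_def n_def)
  have mix: "\<bar>Re p * Im u\<bar> \<le> a * \<bar>Re p\<bar>" if "\<bar>Im u\<bar> \<le> - Im p" for u
    using mult_left_mono[OF that abs_ge_zero[of "Re p"]] by (simp add: abs_mult a_def mult.commute)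
  show thesis
  proof (rule that[OF L])
    fix u assume u: "\<bar>Im u\<bar> \<le> - Im p" "L \<le> Re u"
    have "a * L \<le> a * Re u"
      using a u by simp
    then have "- (a * Re u) - Re p * Im u \<le> - (n * ln 2 / (2 * pi))"
      using mix[OF u(1)] aL a unfolding abs_le_iff by linarith
    then have "Re (2 * pi * \<i> / p * u) \<le> 2 * pi * - (n * ln 2 / (2 * pi)) / n"
      unfolding Re_cu using n by (intro divide_right_mono mult_left_mono) auto
    also have "\<dots> = - ln 2"
      using n by simp
    finally show "cmod (periodic_kernel p u) \<le> 2 * cmod (2 * pi * \<i> / p)"
      unfolding periodic_kernel_def by (rule norm_divide_exp_minus_1_le)
  next
    fix u assume u: "\<bar>Im u\<bar> \<le> - Im p" "Re u \<le> - L"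
    have "a * Re u \<le> a * - L"
      using mult_left_mono[OF u(2), of a] a by simp
    then have "n * ln 2 / (2 * pi) \<le> - (a * Re u) - Re p * Im u"
      using mix[OF u(1)] aL a unfolding abs_le_iff by simp
    then have "2 * pi * (n * ln 2 / (2 * pi)) / n \<le> Re (2 * pi * \<i> / p * u)"
      unfolding Re_cu using n by (intro divide_right_mono mult_left_mono) auto
    moreover have "2 * pi * (n * ln 2 / (2 * pi)) / n = ln 2"
      using n by simp
    ultimately show "cmod (periodic_kernel p u)
        \<le> 2 * cmod (2 * pi * \<i> / p) * exp (- Re (2 * pi * \<i> / p * u))"
      unfolding periodic_kernel_def by (intro norm_divide_exp_minus_1_le_exp) simp
  qed
qed

lemma periodic_kernel_residue:
  assumes "p \<noteq> 0"
  shows "((\<lambda>u. u * periodic_kernel p u) \<longlongrightarrow> 1) (at 0)"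
proof -
  define c where "c = 2 * pi * \<i> / p"
  have c: "c \<noteq> 0"
    using assms by (simp add: c_def)
  have "((\<lambda>u. exp (c * u)) has_field_derivative c) (at 0)"
    by (auto intro!: derivative_eq_intros)
  then have "((\<lambda>u. (exp (c * u) - 1) / u) \<longlongrightarrow> c) (at 0)"
    by (simp add: has_field_derivative_iff)
  then have "((\<lambda>u. c / ((exp (c * u) - 1) / u)) \<longlongrightarrow> c / c) (at 0)"
    using c by (intro tendsto_divide tendsto_const) auto
  moreover have "c / ((exp (c * u) - 1) / u) = u * periodic_kernel p u" for u
    by (simp add: periodic_kernel_def c_def)
  ultimately show ?thesis
    using c by simp
qed

lemma holomorphic_on_periodic_kernel:
  "periodic_kernel p holomorphic_on {u. \<bar>Im u\<bar> < \<bar>Im p\<bar> \<and> u \<noteq> 0}"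
proof -
  have "(\<lambda>u. periodic_kernel p u) holomorphic_on {u. \<bar>Im u\<bar> < \<bar>Im p\<bar> \<and> u \<noteq> 0}"
    unfolding periodic_kernel_def using exp_periodic_ne_1 by (intro holomorphic_intros) auto
  then show ?thesis
    by simp
qed

lemma Cauchy_periodic_kernel_rectpath:
  assumes "open \<Omega>" and "convex \<Omega>" and H: "H holomorphic_on \<Omega>"
    and width: "\<And>w. w \<in> \<Omega> \<Longrightarrow> \<bar>Im (w - z)\<bar> < \<bar>Im p\<bar>"
    and z: "z \<in> box a b" and ab: "cbox a b \<subseteq> \<Omega>"
  shows "((\<lambda>w. H w * periodic_kernel p (w - z)) has_contour_integral 2 * pi * \<i> * H z)
           (rectpath a b)"
proof -
  have p: "p \<noteq> 0"
    using width ab z box_subset_cbox by fastforce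
  define q where "q w = (if w = z then 1 else (w - z) * periodic_kernel p (w - z))" for w
  have "(\<lambda>w. (w - z) * periodic_kernel p (w - z)) holomorphic_on \<Omega> - {z}"
    unfolding periodic_kernel_def
    by (intro holomorphic_intros) (use exp_periodic_ne_1 width in force)
  then have "q holomorphic_on \<Omega> - {z}"
    by (rule holomorphic_transform) (simp add: q_def)
  moreover have "(q \<longlongrightarrow> q z) (at z within \<Omega>)"
  proof -
    have "((\<lambda>w. (w - z) * periodic_kernel p (w - z)) \<longlongrightarrow> 1) (at z)"
      using periodic_kernel_residue[OF p] by (simp add: LIM_offset_zero_iff)
    then have "(q \<longlongrightarrow> 1) (at z)"
      by (rule Lim_transform_eventually) (simp add: q_def eventually_at_filter)
    then show ?thesis
      by (simp add: q_def Lim_at_imp_Lim_at_within)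
  qed
  ultimately have "q holomorphic_on \<Omega>"
    using no_isolated_singularity'[of "{z}" q \<Omega>] assms(1) by auto
  then have "(\<lambda>w. H w * q w) holomorphic_on \<Omega>"
    using H by (intro holomorphic_intros)
  moreover have "z \<in> interior \<Omega>"
    using z ab assms(1) box_subset_cbox interior_open by blast
  moreover have sides: "path_image (rectpath a b) \<subseteq> \<Omega> - {z}"
    using z ab by (auto simp: path_image_rectpath_cbox_minus_box in_box_complex_iff)
  ultimately have "((\<lambda>w. H w * q w / (w - z)) has_contour_integral
                    2 * pi * \<i> * winding_number (rectpath a b) z * (H z * q z)) (rectpath a b)"
    by (intro Cauchy_integral_formula_convex_simple[OF assms(2)]) auto
  then have "((\<lambda>w. H w * q w / (w - z)) has_contour_integral 2 * pi * \<i> * H z) (rectpath a b)"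
    using winding_number_rectpath[OF z] by (simp add: q_def)
  then show ?thesis
    by (rule has_contour_integral_eq) (use sides in \<open>auto simp: q_def\<close>)
qed

section \<open>Contour and interval integrals\<close>

definition half_strip :: "real \<Rightarrow> real \<Rightarrow> complex set" where
  "half_strip \<alpha> A = {w. - \<alpha> < Im w \<and> Im w < 0 \<and> A < Re w}"

lemma continuous_on_Complex [continuous_intros]:
  "continuous_on T f \<Longrightarrow> continuous_on T g \<Longrightarrow> continuous_on T (\<lambda>x. Complex (f x) (g x))"
  unfolding Complex_eq by (intro continuous_intros)

lemma open_half_strip: "open (half_strip \<alpha> A)"
  unfolding half_strip_def by (auto intro!: open_Collect_conj open_Collect_less continuous_intros)

lemma convex_half_strip: "convex (half_strip \<alpha> A)"
proof -
  have "half_strip \<alpha> A = {w. Im w > - \<alpha>} \<inter> {w. Im w < 0} \<inter> {w. Re w > A}"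
    by (auto simp: half_strip_def)
  then show ?thesis
    by (metis convex_Int convex_halfspace_Im_gt convex_halfspace_Im_lt convex_halfspace_Re_gt)
qed

lemma has_contour_integral_horizontal_iff:
  fixes f :: "complex \<Rightarrow> complex"
  assumes "a < b"
  shows "(f has_contour_integral I) (linepath (Complex a y) (Complex b y)) \<longleftrightarrow>
         ((\<lambda>x. f (Complex x y)) has_integral I) {a..b}"
proof -
  define f' where "f' w = f (w + Complex 0 y)" for w
  have line: "linepath (of_real a) (of_real b) t + Complex 0 y = linepath (Complex a y) (Complex b y) t"
    for t by (simp add: linepath_def complex_eq_iff algebra_simps)
  have "(f' has_contour_integral I) (linepath (of_real a) (of_real b)) \<longleftrightarrow>
         ((\<lambda>x. f' (of_real x)) has_integral I) {a..b}"
    using has_contour_integral_linepath_Reals_iff[of "of_real a" "of_real b" f' I] assms by simp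
  moreover have "(of_real b - of_real a :: complex) = Complex b y - Complex a y"
    by (simp add: complex_eq_iff)
  then have "(f' has_contour_integral I) (linepath (of_real a) (of_real b)) \<longleftrightarrow>
      (f has_contour_integral I) (linepath (Complex a y) (Complex b y))"
    unfolding has_contour_integral_linepath f'_def line by simp
  moreover have "f' (of_real x) = f (Complex x y)" for x
    by (simp add: f'_def Complex_eq)
  ultimately show ?thesis
    by simp
qed

lemma contour_integral_rectpath_sides:
  fixes f :: "complex \<Rightarrow> complex"
  assumes "s < S" and "y0 < y1"
    and f: "continuous_on (path_image (rectpath (Complex s y0) (Complex S y1))) f"
  shows "contour_integral (rectpath (Complex s y0) (Complex S y1)) f =
           integral {s..S} (\<lambda>x. f (Complex x y0)) - integral {s..S} (\<lambda>x. f (Complex x y1))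
           + contour_integral (linepath (Complex S y0) (Complex S y1)) f
           + contour_integral (linepath (Complex s y1) (Complex s y0)) f"
proof -
  define a1 a2 a3 a4 where "a1 = Complex s y0" and "a2 = Complex S y0"
    and "a3 = Complex S y1" and "a4 = Complex s y1"
  have rect: "rectpath a1 a3 = linepath a1 a2 +++ linepath a2 a3 +++ linepath a3 a4 +++ linepath a4 a1"
    by (simp add: rectpath_def Let_def a1_def a2_def a3_def a4_def)
  have "path_image (rectpath a1 a3) =
          closed_segment a1 a2 \<union> closed_segment a2 a3 \<union> closed_segment a3 a4 \<union> closed_segment a4 a1"
    by (simp add: rect path_image_join Un_assoc)
  then have "continuous_on (closed_segment a1 a2) f" "continuous_on (closed_segment a2 a3) f"
      "continuous_on (closed_segment a3 a4) f" "continuous_on (closed_segment a4 a1) f"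
    using f unfolding a1_def a3_def[symmetric] by (auto elim!: continuous_on_subset)
  note int = this[THEN contour_integrable_continuous_linepath]
  have horizontal: "contour_integral (linepath (Complex s y) (Complex S y)) f =
        integral {s..S} (\<lambda>x. f (Complex x y))"
    if "f contour_integrable_on linepath (Complex s y) (Complex S y)" for y
    using that has_contour_integral_horizontal_iff[OF assms(1)]
    by (metis has_contour_integral_integral integral_unique)
  have "contour_integral (linepath a3 a4) f = - contour_integral (linepath a4 a3) f"
    by (rule contour_integral_reverse_linepath) fact
  moreover have "f contour_integrable_on linepath a4 a3"
    by (rule contour_integrable_continuous_linepath) (simp add: closed_segment_commute \<open>continuous_on (closed_segment a3 a4) f\<close>)
  ultimately show ?thesis
    using int horizontal[of y0] horizontal[of y1]
    unfolding a1_def[symmetric] a3_def[symmetric] rect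
    by (simp add: contour_integrable_joinI a1_def a2_def a3_def a4_def)
qed

lemma norm_contour_integral_vertical_le:
  assumes "continuous_on (closed_segment (Complex x y0) (Complex x y1)) f" and "0 \<le> M"
    and "\<And>y. y \<in> closed_segment y0 y1 \<Longrightarrow> cmod (f (Complex x y)) \<le> M"
  shows "cmod (contour_integral (linepath (Complex x y0) (Complex x y1)) f) \<le> M * \<bar>y1 - y0\<bar>"
proof -
  have "cmod (f w) \<le> M" if "w \<in> closed_segment (Complex x y0) (Complex x y1)" for w
  proof -
    have "Re w = x" "Im w \<in> closed_segment y0 y1"
      using that by (auto simp: closed_segment_same_Re)
    then show ?thesis
      using assms(3)[of "Im w"] by (metis complex_surj)
  qed
  then have "cmod (contour_integral (linepath (Complex x y0) (Complex x y1)) f)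
      \<le> M * cmod (Complex x y1 - Complex x y0)"
    using assms(1,2) by (intro contour_integral_bound_linepath contour_integrable_continuous_linepath)
  also have "cmod (Complex x y1 - Complex x y0) = \<bar>y1 - y0\<bar>"
    by (simp add: cmod_def)
  finally show ?thesis .
qed

lemma norm_integral_shift_diff_le:
  fixes g :: "real \<Rightarrow> complex"
  assumes cont: "continuous_on {s - \<bar>\<kappa>\<bar>..S + \<bar>\<kappa>\<bar>} g" and sS: "s + \<bar>\<kappa>\<bar> \<le> S - \<bar>\<kappa>\<bar>"
    and left: "\<And>x. x \<in> {s - \<bar>\<kappa>\<bar>..s + \<bar>\<kappa>\<bar>} \<Longrightarrow> cmod (g x) \<le> B1"
    and right: "\<And>x. x \<in> {S - \<bar>\<kappa>\<bar>..S + \<bar>\<kappa>\<bar>} \<Longrightarrow> cmod (g x) \<le> B2"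
  shows "cmod (integral {s..S} (\<lambda>x. g (x - \<kappa>)) - integral {s..S} g) \<le> \<bar>\<kappa>\<bar> * (B1 + B2)"
proof -
  have shift: "integral {s..S} (\<lambda>x. g (x - \<kappa>)) = integral {s - \<kappa>..S - \<kappa>} g"
    using integral_shift_real_ivl[of "s - \<kappa>" "- \<kappa>" "S - \<kappa>" g] by simp
  have sub: "continuous_on {u..v} g" if "s - \<bar>\<kappa>\<bar> \<le> u" "v \<le> S + \<bar>\<kappa>\<bar>" for u v
    by (rule continuous_on_subset[OF cont]) (use that in auto)
  have split: "integral {u..w} g = integral {u..v} g + integral {v..w} g"
    if "s - \<bar>\<kappa>\<bar> \<le> u" "u \<le> v" "v \<le> w" "w \<le> S + \<bar>\<kappa>\<bar>" for u v w
    using that by (intro Henstock_Kurzweil_Integration.integral_combine[symmetric] integrable_continuous_interval sub) auto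
  have end_left: "cmod (integral {u..v} g) \<le> B1 * (v - u)"
    if "s - \<bar>\<kappa>\<bar> \<le> u" "u \<le> v" "v \<le> s + \<bar>\<kappa>\<bar>" for u v
    using that sS by (intro integral_bound sub left) auto
  have end_right: "cmod (integral {u..v} g) \<le> B2 * (v - u)"
    if "S - \<bar>\<kappa>\<bar> \<le> u" "u \<le> v" "v \<le> S + \<bar>\<kappa>\<bar>" for u v
    using that sS by (intro integral_bound sub right) auto
  show ?thesis
  proof (cases "\<kappa> \<ge> 0")
    case True
    have "integral {s..S} (\<lambda>x. g (x - \<kappa>)) - integral {s..S} g
        = integral {s - \<kappa>..s} g - integral {S - \<kappa>..S} g"
      using True sS by (simp add: shift split[of "s - \<kappa>" s "S - \<kappa>"] split[of s "S - \<kappa>" S])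
    also have "cmod \<dots> \<le> B1 * \<kappa> + B2 * \<kappa>"
      using True sS end_left[of "s - \<kappa>" s] end_right[of "S - \<kappa>" S]
      by (intro order.trans[OF norm_triangle_ineq4] add_mono) auto
    finally show ?thesis
      using True by (simp add: algebra_simps)
  next
    case False
    have "integral {s..S} (\<lambda>x. g (x - \<kappa>)) - integral {s..S} g
        = integral {S..S - \<kappa>} g - integral {s..s - \<kappa>} g"
      using False sS by (simp add: shift split[of s "s - \<kappa>" S] split[of "s - \<kappa>" S "S - \<kappa>"])
    also have "cmod \<dots> \<le> B2 * - \<kappa> + B1 * - \<kappa>"
      using False sS end_left[of s "s - \<kappa>"] end_right[of S "S - \<kappa>"]
      by (intro order.trans[OF norm_triangle_ineq4] add_mono) auto
    finally show ?thesis
      using False by (simp add: algebra_simps)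
  qed
qed

lemma integral_uniformly_continuous_diff_tendsto_0:
  fixes G :: "complex \<Rightarrow> complex" and a b c :: real
  assumes "a \<le> b" and K: "compact K" and G: "continuous_on K G" and "yb > 0"
    and PQ: "\<And>x y. x \<in> {a..b} \<Longrightarrow> 0 < y \<Longrightarrow> y < yb \<Longrightarrow>
               P y x \<in> K \<and> Q y x \<in> K \<and> dist (P y x) (Q y x) \<le> c * y"
    and cont: "\<And>y. 0 < y \<Longrightarrow> y < yb \<Longrightarrow> continuous_on {a..b} (P y) \<and> continuous_on {a..b} (Q y)"
  shows "((\<lambda>y. integral {a..b} (\<lambda>x. cmod (G (P y x) - G (Q y x)))) \<longlongrightarrow> 0) (at_right 0)"
proof (rule tendstoI)
  fix e :: real assume e: "e > 0"
  define e' where "e' = e / (2 * (b - a + 1))"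
  have e': "e' > 0"
    using e \<open>a \<le> b\<close> by (simp add: e'_def)
  obtain d where d: "d > 0" and unif: "\<And>u u'. u \<in> K \<Longrightarrow> u' \<in> K \<Longrightarrow> dist u' u < d \<Longrightarrow> dist (G u') (G u) < e'"
    using compact_uniformly_continuous[OF G K] e' unfolding uniformly_continuous_on_def by metis
  have "\<forall>\<^sub>F y in at_right 0. 0 < y \<and> y < min yb (d / (\<bar>c\<bar> + 1))"
    using \<open>yb > 0\<close> d by (intro eventually_at_right_field[THEN iffD2] exI[of _ "min yb (d / (\<bar>c\<bar> + 1))"]) auto
  then show "\<forall>\<^sub>F y in at_right 0. dist (integral {a..b} (\<lambda>x. cmod (G (P y x) - G (Q y x)))) 0 < e"
  proof eventually_elim
    case (elim y)
    have close: "cmod (G (P y x) - G (Q y x)) \<le> e'" if x: "x \<in> {a..b}" for x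
    proof -
      have PQx: "P y x \<in> K" "Q y x \<in> K" "dist (P y x) (Q y x) \<le> c * y"
        using PQ[OF x] elim by auto
      have "c * y \<le> (\<bar>c\<bar> + 1) * y"
        using elim by (intro mult_right_mono) auto
      also have "\<dots> < d"
        using elim by (simp add: field_simps)
      finally have "dist (P y x) (Q y x) < d"
        using PQx(3) by simp
      then have "dist (G (P y x)) (G (Q y x)) < e'"
        using unif[OF PQx(2,1)] by blast
      then show ?thesis
        by (simp add: dist_norm)
    qed
    have "continuous_on {a..b} (\<lambda>x. G (P y x))" "continuous_on {a..b} (\<lambda>x. G (Q y x))"
      using cont[of y] PQ elim by (auto intro!: continuous_on_compose2[OF G])
    then have "continuous_on {a..b} (\<lambda>x. cmod (G (P y x) - G (Q y x)))"
      by (intro continuous_intros)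
    then have "norm (integral {a..b} (\<lambda>x. cmod (G (P y x) - G (Q y x)))) \<le> e' * (b - a)"
      using \<open>a \<le> b\<close> close by (intro integral_bound) auto
    also have "\<dots> < e"
    proof -
      have "a * e \<le> b * e"
        using \<open>a \<le> b\<close> e by (intro mult_right_mono) auto
      then have "a * e < b * e + e * 2"
        using e by linarith
      then show ?thesis
        using e \<open>a \<le> b\<close> by (simp add: e'_def field_simps)
    qed
    finally show ?case
      by simp
  qed
qed

section \<open>Boundary values in \<open>L\<^sup>2\<close>\<close>

definition L2_on :: "real set \<Rightarrow> (real \<Rightarrow> complex) \<Rightarrow> bool" where
  "L2_on S f \<longleftrightarrow> f measurable_on S \<and> (\<lambda>x. (cmod (f x))\<^sup>2) integrable_on S"

lemma L2_loc_iff_L2_on: "L2_loc f \<longleftrightarrow> (\<forall>a b. L2_on {a..b} f)"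
  by (simp add: L2_loc_def L2_on_def)

lemma negligible_affine_image:
  fixes N :: "real set"
  assumes "negligible N"
  shows "negligible ((\<lambda>y. m * y + c) ` N)"
proof (rule negligible_differentiable_image_negligible[OF _ assms])
  have "((\<lambda>y. m * y + c) has_derivative (\<lambda>h. m * h)) (at x within N)" for x
    by (auto intro!: derivative_eq_intros)
  then show "(\<lambda>y. m * y + c) differentiable_on N"
    unfolding differentiable_on_def differentiable_def by blast
qed auto

lemma measurable_on_affine:
  fixes f :: "real \<Rightarrow> complex"
  assumes m: "m \<noteq> 0" and f: "f measurable_on S"
  shows "(\<lambda>x. f (m * x + c)) measurable_on {x. m * x + c \<in> S}"
proof -
  from f obtain N g where N: "negligible N" and g: "\<And>n. continuous_on UNIV (g n)"
    and lim: "\<And>x. x \<notin> N \<Longrightarrow> (\<lambda>n. g n x) \<longlonglongrightarrow> (if x \<in> S then f x else 0)"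
    unfolding measurable_on_def by blast
  define N' where "N' = (\<lambda>y. (1 / m) * y + (- c / m)) ` N"
  have "negligible N'"
    unfolding N'_def by (rule negligible_affine_image[OF N])
  moreover have "continuous_on UNIV (\<lambda>x. g n (m * x + c))" for n
    by (rule continuous_on_compose2[OF g]) (auto intro!: continuous_intros)
  moreover have "m * x + c \<notin> N" if "x \<notin> N'" for x
  proof
    assume "m * x + c \<in> N"
    then have "(1 / m) * (m * x + c) + (- c / m) \<in> N'"
      unfolding N'_def by blast
    with that m show False
      by (simp add: field_simps)
  qed
  ultimately show ?thesis
    unfolding measurable_on_def using lim by (intro exI[of _ N'] exI[of _ "\<lambda>n x. g n (m * x + c)"]) auto
qed

lemma L2_on_shift:
  assumes "L2_on {a + c..b + c} f"
  shows "L2_on {a..b} (\<lambda>x. f (x + c))"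
proof -
  have "(\<lambda>x. f (1 * x + c)) measurable_on {x. 1 * x + c \<in> {a + c..b + c}}"
    using assms by (intro measurable_on_affine) (auto simp: L2_on_def)
  moreover have "{x. 1 * x + c \<in> {a + c..b + c}} = {a..b}"
    by auto
  moreover have "(\<lambda>x. (cmod (f (x + c)))\<^sup>2) integrable_on {a + c - c..b + c - c}"
    using assms by (intro integrable_shift_real_ivl) (auto simp: L2_on_def)
  ultimately show ?thesis
    by (simp add: L2_on_def)
qed

lemma L2_on_reflect:
  assumes "L2_on {- b..- a} f"
  shows "L2_on {a..b} (\<lambda>x. f (- x))"
proof -
  have "(\<lambda>x. f ((- 1) * x + 0)) measurable_on {x. (- 1) * x + 0 \<in> {- b..- a}}"
    using assms by (intro measurable_on_affine) (auto simp: L2_on_def)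
  moreover have "{x. (- 1) * x + 0 \<in> {- b..- a}} = {a..b}"
    by auto
  moreover have "(\<lambda>x. (cmod (f (- x)))\<^sup>2) integrable_on {- (- a)..- (- b)}"
    using assms Henstock_Kurzweil_Integration.integrable_reflect_real[where f="\<lambda>x. (cmod (f x))\<^sup>2" and a="- b" and b="- a"]
    by (simp add: L2_on_def)
  ultimately show ?thesis
    by (simp add: L2_on_def)
qed

lemma L2_on_cong:
  assumes "L2_on S f" and "\<And>x. x \<in> S \<Longrightarrow> f x = g x"
  shows "L2_on S g"
  using assms measurable_on_spike[of f S "{}" g] integrable_eq[of "\<lambda>x. (cmod (f x))\<^sup>2" S]
  unfolding L2_on_def by auto

lemma L2_on_diff_continuous:
  assumes \<phi>: "L2_on {a..b} \<phi>" and F: "continuous_on {a..b} F"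
  shows "L2_on {a..b} (\<lambda>x. F x - \<phi> x)"
proof -
  have leb: "{a..b} \<in> sets lebesgue"
    by simp
  have F_meas: "F \<in> borel_measurable (lebesgue_on {a..b})"
    using continuous_imp_measurable_on_sets_lebesgue[OF F leb] .
  have \<phi>_meas: "\<phi> \<in> borel_measurable (lebesgue_on {a..b})"
    using \<phi> unfolding L2_on_def measurable_on_iff_borel_measurable[OF leb] by blast
  obtain B where B: "\<And>x. x \<in> {a..b} \<Longrightarrow> cmod (F x) \<le> B"
    using compact_imp_bounded[OF compact_continuous_image[OF F compact_Icc]]
    unfolding bounded_iff by blast
  have "(\<lambda>x. (cmod (F x - \<phi> x))\<^sup>2) integrable_on {a..b}"
  proof (rule measurable_bounded_by_integrable_imp_integrable[OF _ _ _ leb])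
    show "(\<lambda>x. (cmod (F x - \<phi> x))\<^sup>2) \<in> borel_measurable (lebesgue_on {a..b})"
      using F_meas \<phi>_meas by measurable
    show "(\<lambda>x. 2 * B\<^sup>2 + 2 * (cmod (\<phi> x))\<^sup>2) integrable_on {a..b}"
      using \<phi> by (intro integrable_add integrable_on_cmult_left) (auto simp: L2_on_def)
    fix x assume x: "x \<in> {a..b}"
    have "cmod (F x - \<phi> x) \<le> B + cmod (\<phi> x)"
      using B[OF x] norm_triangle_ineq4[of "F x" "\<phi> x"] by linarith
    then have "(cmod (F x - \<phi> x))\<^sup>2 \<le> (B + cmod (\<phi> x))\<^sup>2"
      by (intro power_mono) auto
    also have "\<dots> \<le> 2 * B\<^sup>2 + 2 * (cmod (\<phi> x))\<^sup>2"
      using sum_squares_bound[of B "cmod (\<phi> x)"] by (simp add: power2_eq_square algebra_simps)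
    finally show "norm ((cmod (F x - \<phi> x))\<^sup>2) \<le> 2 * B\<^sup>2 + 2 * (cmod (\<phi> x))\<^sup>2"
      by simp
  qed
  moreover have "(\<lambda>x. F x - \<phi> x) measurable_on {a..b}"
    unfolding measurable_on_iff_borel_measurable[OF leb] using F_meas \<phi>_meas by measurable
  ultimately show ?thesis
    by (simp add: L2_on_def)
qed

lemma abs_le_AM_GM: "d > 0 \<Longrightarrow> \<bar>t :: real\<bar> \<le> d / 2 + t\<^sup>2 / (2 * d)"
proof -
  assume d: "d > 0"
  have "2 * d * \<bar>t\<bar> \<le> d\<^sup>2 + t\<^sup>2"
    using zero_le_power2[of "\<bar>t\<bar> - d"] by (simp add: power2_eq_square algebra_simps)
  with d show ?thesis
    by (simp add: field_simps power2_eq_square)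
qed

lemma L2_on_imp_absolutely_integrable:
  assumes "L2_on {a..b} f"
  shows "f absolutely_integrable_on {a..b}"
proof (rule measurable_bounded_by_integrable_imp_absolutely_integrable)
  show "f \<in> borel_measurable (lebesgue_on {a..b})"
    using assms measurable_on_iff_borel_measurable[of "{a..b}" f] by (simp add: L2_on_def)
  show "(\<lambda>x. 1 / 2 + (cmod (f x))\<^sup>2 / (2 * 1)) integrable_on {a..b}"
    using assms by (intro integrable_add integrable_on_divide) (auto simp: L2_on_def)
  show "norm (f x) \<le> 1 / 2 + (cmod (f x))\<^sup>2 / (2 * 1)" for x
    using abs_le_AM_GM[of 1 "cmod (f x)"] by simp
qed simp

lemma integral_norm_le_L2:
  assumes h: "L2_on {a..b} h" and "a \<le> b" and d: "d > 0"
  shows "integral {a..b} (\<lambda>x. cmod (h x))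
           \<le> (b - a) * d / 2 + integral {a..b} (\<lambda>x. (cmod (h x))\<^sup>2) / (2 * d)"
proof -
  have sq: "(\<lambda>x. (cmod (h x))\<^sup>2) integrable_on {a..b}"
    using h by (simp add: L2_on_def)
  have pointwise: "cmod (h x) \<le> d / 2 + (cmod (h x))\<^sup>2 / (2 * d)" for x
    using abs_le_AM_GM[OF d, of "cmod (h x)"] by simp
  have "integral {a..b} (\<lambda>x. cmod (h x)) \<le> integral {a..b} (\<lambda>x. d / 2 + (cmod (h x))\<^sup>2 / (2 * d))"
    using L2_on_imp_absolutely_integrable[OF h] sq pointwise
    by (intro integral_le integrable_add integrable_on_divide) (auto simp: absolutely_integrable_on_def)
  also have "\<dots> = integral {a..b} (\<lambda>x. d / 2) + integral {a..b} (\<lambda>x. (cmod (h x))\<^sup>2 / (2 * d))"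
    using sq by (intro integral_add integrable_on_divide) auto
  also have "\<dots> = (b - a) * d / 2 + integral {a..b} (\<lambda>x. (cmod (h x))\<^sup>2) / (2 * d)"
    using \<open>a \<le> b\<close> by simp
  finally show ?thesis .
qed

lemma L2_tendsto_imp_L1_tendsto:
  assumes "a \<le> b" and L2: "\<forall>\<^sub>F y in F. L2_on {a..b} (h y)"
    and lim: "((\<lambda>y. integral {a..b} (\<lambda>x. (cmod (h y x))\<^sup>2)) \<longlongrightarrow> 0) F"
  shows "((\<lambda>y. integral {a..b} (\<lambda>x. cmod (h y x))) \<longlongrightarrow> 0) F"
proof (rule tendstoI)
  fix e :: real assume e: "e > 0"
  define d where "d = e / (b - a + 1)"
  have d: "d > 0"
    using e \<open>a \<le> b\<close> by (simp add: d_def)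
  have "\<forall>\<^sub>F y in F. integral {a..b} (\<lambda>x. (cmod (h y x))\<^sup>2) < d * e"
    using order_tendstoD(2)[OF lim, of "d * e"] d e by simp
  with L2 show "\<forall>\<^sub>F y in F. dist (integral {a..b} (\<lambda>x. cmod (h y x))) 0 < e"
  proof eventually_elim
    case (elim y)
    have "0 \<le> integral {a..b} (\<lambda>x. cmod (h y x))"
      using L2_on_imp_absolutely_integrable[OF elim(1)]
      by (intro integral_nonneg) (auto simp: absolutely_integrable_on_def)
    moreover have "integral {a..b} (\<lambda>x. (cmod (h y x))\<^sup>2) / (2 * d) \<le> d * e / (2 * d)"
      using elim(2) d by (intro divide_right_mono) auto
    then have "integral {a..b} (\<lambda>x. cmod (h y x)) \<le> (b - a) * d / 2 + d * e / (2 * d)"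
      using integral_norm_le_L2[OF elim(1) \<open>a \<le> b\<close> d] by linarith
    moreover have "(b - a) * d < e"
    proof -
      have "(b - a) * d = e * ((b - a) / (b - a + 1))"
        by (simp add: d_def)
      also have "\<dots> < e * 1"
        using e \<open>a \<le> b\<close> by (intro mult_strict_left_mono) auto
      finally show ?thesis
        by simp
    qed
    then have "(b - a) * d / 2 + d * e / (2 * d) < e"
      using d by simp
    ultimately show ?case
      by simp
  qed
qed

lemma boundary_value_L1_tendsto:
  fixes F G :: "complex \<Rightarrow> complex"
  assumes "a \<le> b" and "0 < yb" and \<phi>: "L2_on {a..b} \<phi>" and K: "compact K" and G: "continuous_on K G"
    and PQ: "\<And>x y. x \<in> {a..b} \<Longrightarrow> 0 < y \<Longrightarrow> y < yb \<Longrightarrow> P y x \<in> K \<and> Q x \<in> K \<and> dist (P y x) (Q x) \<le> y"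
    and cont: "\<And>y. 0 < y \<Longrightarrow> y < yb \<Longrightarrow> continuous_on {a..b} (\<lambda>x. F (P y x)) \<and> continuous_on {a..b} (P y)"
    and "continuous_on {a..b} Q"
    and L2: "((\<lambda>y. integral {a..b} (\<lambda>x. (cmod (F (P y x) - \<phi> x))\<^sup>2)) \<longlongrightarrow> 0) (at_right 0)"
  shows "((\<lambda>y. integral {a..b} (\<lambda>x. cmod ((F (P y x) + G (P y x)) - (\<phi> x + G (Q x))))) \<longlongrightarrow> 0) (at_right 0)"
proof -
  have ev: "\<forall>\<^sub>F y in at_right 0. 0 < y \<and> y < yb"
    using \<open>0 < yb\<close> by (intro eventually_at_right_field[THEN iffD2] exI[of _ yb]) auto
  have L2_diff: "L2_on {a..b} (\<lambda>x. F (P y x) - \<phi> x)" if "0 < y" "y < yb" for y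
    using cont[OF that] \<phi> by (intro L2_on_diff_continuous) auto
  have G_cont: "continuous_on {a..b} (\<lambda>x. G (P y x) - G (Q x))" if "0 < y" "y < yb" for y
  proof -
    have "continuous_on {a..b} (\<lambda>x. G (P y x))" "continuous_on {a..b} (\<lambda>x. G (Q x))"
      using cont[OF that] PQ that \<open>continuous_on {a..b} Q\<close>
      by (auto intro!: continuous_on_compose2[OF G])
    then show ?thesis
      by (rule continuous_on_diff)
  qed
  have F_lim: "((\<lambda>y. integral {a..b} (\<lambda>x. cmod (F (P y x) - \<phi> x))) \<longlongrightarrow> 0) (at_right 0)"
    using ev L2_diff by (intro L2_tendsto_imp_L1_tendsto[OF \<open>a \<le> b\<close> _ L2]) (auto elim: eventually_mono)
  have G_lim: "((\<lambda>y. integral {a..b} (\<lambda>x. cmod (G (P y x) - G (Q x)))) \<longlongrightarrow> 0) (at_right 0)"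
    using PQ cont \<open>continuous_on {a..b} Q\<close>
    by (intro integral_uniformly_continuous_diff_tendsto_0[OF \<open>a \<le> b\<close> K G \<open>0 < yb\<close>, where c = 1]) auto
  from ev have "\<forall>\<^sub>F y in at_right 0.
      norm (integral {a..b} (\<lambda>x. cmod ((F (P y x) + G (P y x)) - (\<phi> x + G (Q x)))))
        \<le> integral {a..b} (\<lambda>x. cmod (F (P y x) - \<phi> x)) + integral {a..b} (\<lambda>x. cmod (G (P y x) - G (Q x)))"
  proof eventually_elim
    case (elim y)
    have F_int: "(\<lambda>x. F (P y x) - \<phi> x) absolutely_integrable_on {a..b}"
      using L2_diff elim L2_on_imp_absolutely_integrable by blast
    have G_int: "(\<lambda>x. G (P y x) - G (Q x)) absolutely_integrable_on {a..b}"
      using G_cont elim absolutely_integrable_continuous_real by blast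
    have eq: "F (P y x) + G (P y x) - (\<phi> x + G (Q x)) = (F (P y x) - \<phi> x) + (G (P y x) - G (Q x))" for x
      by (simp add: algebra_simps)
    have "(\<lambda>x. (F (P y x) - \<phi> x) + (G (P y x) - G (Q x))) absolutely_integrable_on {a..b}"
      using F_int G_int by (rule set_integral_add(1))
    then have "norm (integral {a..b} (\<lambda>x. cmod ((F (P y x) - \<phi> x) + (G (P y x) - G (Q x)))))
        \<le> integral {a..b} (\<lambda>x. cmod (F (P y x) - \<phi> x) + cmod (G (P y x) - G (Q x)))"
      using F_int G_int
      by (intro integral_norm_bound_integral integrable_add)
        (auto simp: absolutely_integrable_on_def norm_triangle_ineq)
    also have "\<dots> = integral {a..b} (\<lambda>x. cmod (F (P y x) - \<phi> x)) + integral {a..b} (\<lambda>x. cmod (G (P y x) - G (Q x)))"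
      using F_int G_int by (intro integral_add) (auto simp: absolutely_integrable_on_def)
    finally show ?case
      unfolding eq .
  qed
  moreover have "((\<lambda>y. integral {a..b} (\<lambda>x. cmod (F (P y x) - \<phi> x))
      + integral {a..b} (\<lambda>x. cmod (G (P y x) - G (Q x)))) \<longlongrightarrow> 0) (at_right 0)"
    using tendsto_add[OF F_lim G_lim] by simp
  ultimately show ?thesis
    by (rule Lim_null_comparison)
qed

section \<open>A half-strip glued along a period\<close>

text \<open>\<open>hm\<close> and \<open>hp\<close> are the boundary values of \<open>H\<close> on the lower edge \<open>\<real>\<close> and the upper edge
  \<open>\<real> - \<i>\<alpha>\<close>, in \<open>L\<^sup>1\<close> on compact intervals; \<open>gluing\<close> says that across the strip \<open>H\<close> is
  periodic with period \<open>\<kappa> - \<i>\<alpha>\<close>, the period of \<open>kernel\<close>.\<close>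
locale half_strip_gluing =
  fixes \<alpha> \<kappa> A B :: real and H :: "complex \<Rightarrow> complex" and hm hp :: "real \<Rightarrow> complex"
  assumes \<alpha>_pos: "0 < \<alpha>"
    and holomorphic: "H holomorphic_on half_strip \<alpha> A"
    and bounded: "\<And>w. w \<in> half_strip \<alpha> A \<Longrightarrow> cmod (H w) \<le> B"
    and vanishing: "\<And>e. 0 < e \<Longrightarrow> \<exists>R. \<forall>w \<in> half_strip \<alpha> R. cmod (H w) \<le> e"
    and lower_integrable: "\<And>a b. A < a \<Longrightarrow> hm absolutely_integrable_on {a..b}"
    and upper_integrable: "\<And>a b. A < a \<Longrightarrow> hp absolutely_integrable_on {a..b}"
    and lower_bv: "\<And>a b. A < a \<Longrightarrow> a \<le> b \<Longrightarrow>
      ((\<lambda>y. integral {a..b} (\<lambda>x. cmod (H (Complex x (- y)) - hm x))) \<longlongrightarrow> 0) (at_right 0)"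
    and upper_bv: "\<And>a b. A < a \<Longrightarrow> a \<le> b \<Longrightarrow>
      ((\<lambda>y. integral {a..b} (\<lambda>x. cmod (H (Complex x (- \<alpha> + y)) - hp x))) \<longlongrightarrow> 0) (at_right 0)"
    and gluing: "negligible {x. A < x \<and> hp x \<noteq> hm (x - \<kappa>)}"
begin

abbreviation kernel :: "complex \<Rightarrow> complex" where
  "kernel \<equiv> periodic_kernel (Complex \<kappa> (- \<alpha>))"

lemma period_ne_0: "Complex \<kappa> (- \<alpha>) \<noteq> 0"
  using \<alpha>_pos by (simp add: complex_eq_iff)

lemma continuous_on_horizontal:
  assumes "A < a - c" and "- \<alpha> < y" and "y < 0"
  shows "continuous_on {a..b} (\<lambda>x. H (Complex (x - c) y))"
proof -
  have "continuous_on {a..b} (\<lambda>x. Complex (x - c) y)"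
    by (intro continuous_intros)
  moreover have "(\<lambda>x. Complex (x - c) y) ` {a..b} \<subseteq> half_strip \<alpha> A"
    using assms by (auto simp: half_strip_def)
  ultimately show ?thesis
    by (rule continuous_on_compose2[OF holomorphic_on_imp_continuous_on[OF holomorphic]])
qed

lemma continuous_on_kernel_product:
  assumes "- \<alpha> < Im z" and "Im z < 0"
  shows "continuous_on (half_strip \<alpha> A - {z}) (\<lambda>w. H w * kernel (w - z))"
proof -
  have "(\<lambda>w. kernel (w - z)) holomorphic_on half_strip \<alpha> A - {z}"
    using assms
    by (intro holomorphic_on_compose_gen[OF _ holomorphic_on_periodic_kernel, unfolded o_def]
        holomorphic_intros) (auto simp: half_strip_def)
  then show ?thesis
    using holomorphic
    by (intro holomorphic_on_imp_continuous_on holomorphic_intros) (auto elim: holomorphic_on_subset)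
qed

lemma boundary_difference_integrable:
  assumes "A < a" and "- \<alpha> < y" and "y < 0" and "h absolutely_integrable_on {a..b}"
  shows "(\<lambda>x. cmod (H (Complex x y) - h x)) integrable_on {a..b}"
proof -
  have "continuous_on {a..b} (\<lambda>x. H (Complex (x - 0) y))"
    using assms by (intro continuous_on_horizontal) auto
  then have "(\<lambda>x. H (Complex x y) - h x) absolutely_integrable_on {a..b}"
    using set_integral_diff(1)[OF absolutely_integrable_continuous_real assms(4)] by simp
  then show ?thesis
    by (simp add: absolutely_integrable_on_def)
qed

lemma boundary_values_glue:
  assumes "A + \<bar>\<kappa>\<bar> < s" and "s \<le> S"
  shows "((\<lambda>\<epsilon>. integral {s..S} (\<lambda>x. cmod (H (Complex x (- \<alpha> + \<epsilon>)) - H (Complex (x - \<kappa>) (- \<epsilon>)))))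
           \<longlongrightarrow> 0) (at_right 0)"
proof -
  define T1 where "T1 \<epsilon> x = cmod (H (Complex x (- \<alpha> + \<epsilon>)) - hp x)" for \<epsilon> x
  define T3 where "T3 \<epsilon> x = cmod (H (Complex x (- \<epsilon>)) - hm x)" for \<epsilon> x
  have A: "A < s" "A < s - \<kappa>"
    using assms by auto
  have "s - \<kappa> \<le> S - \<kappa>"
    using assms by simp
  from tendsto_add[OF upper_bv[OF A(1) assms(2)] lower_bv[OF A(2) this]]
  have lim: "((\<lambda>\<epsilon>. integral {s..S} (T1 \<epsilon>) + integral {s - \<kappa>..S - \<kappa>} (T3 \<epsilon>)) \<longlongrightarrow> 0 + 0) (at_right 0)"
    unfolding T1_def T3_def .
  have glue: "((\<lambda>x. cmod (hp x - hm (x - \<kappa>))) has_integral 0) {s..S}"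
    by (rule has_integral_spike[OF gluing, where f = "\<lambda>x. 0"]) (use A in auto)
  have "\<forall>\<^sub>F \<epsilon> in at_right 0. 0 < \<epsilon> \<and> \<epsilon> < \<alpha>"
    using \<alpha>_pos by (intro eventually_at_right_field[THEN iffD2] exI[of _ \<alpha>]) auto
  then have "\<forall>\<^sub>F \<epsilon> in at_right 0.
      norm (integral {s..S} (\<lambda>x. cmod (H (Complex x (- \<alpha> + \<epsilon>)) - H (Complex (x - \<kappa>) (- \<epsilon>)))))
        \<le> integral {s..S} (T1 \<epsilon>) + integral {s - \<kappa>..S - \<kappa>} (T3 \<epsilon>)"
  proof eventually_elim
    case (elim \<epsilon>)
    have T1: "T1 \<epsilon> integrable_on {s..S}"
      unfolding T1_def using A elim upper_integrable by (intro boundary_difference_integrable) auto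
    have "T3 \<epsilon> integrable_on {s - \<kappa>..S - \<kappa>}"
      unfolding T3_def using A elim lower_integrable by (intro boundary_difference_integrable) auto
    then have T3: "(\<lambda>x. T3 \<epsilon> (x - \<kappa>)) integrable_on {s..S}"
      and T3_eq: "integral {s..S} (\<lambda>x. T3 \<epsilon> (x - \<kappa>)) = integral {s - \<kappa>..S - \<kappa>} (T3 \<epsilon>)"
      using integrable_shift_real_ivl[of "T3 \<epsilon>" "s - \<kappa>" "S - \<kappa>" "- \<kappa>"]
        integral_shift_real_ivl[of "s - \<kappa>" "- \<kappa>" "S - \<kappa>" "T3 \<epsilon>"] by simp_all
    have "continuous_on {s..S} (\<lambda>x. H (Complex x (- \<alpha> + \<epsilon>)))"
      using continuous_on_horizontal[of s 0 "- \<alpha> + \<epsilon>" S] A elim by simp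
    moreover have "continuous_on {s..S} (\<lambda>x. H (Complex (x - \<kappa>) (- \<epsilon>)))"
      using continuous_on_horizontal[of s \<kappa> "- \<epsilon>" S] A elim by simp
    ultimately have cont: "continuous_on {s..S} (\<lambda>x. H (Complex x (- \<alpha> + \<epsilon>)) - H (Complex (x - \<kappa>) (- \<epsilon>)))"
      by (rule continuous_on_diff)
    have "integral {s..S} (\<lambda>x. cmod (H (Complex x (- \<alpha> + \<epsilon>)) - H (Complex (x - \<kappa>) (- \<epsilon>))))
        \<le> integral {s..S} (\<lambda>x. T1 \<epsilon> x + cmod (hp x - hm (x - \<kappa>)) + T3 \<epsilon> (x - \<kappa>))"
    proof (rule integral_le)
      show "(\<lambda>x. T1 \<epsilon> x + cmod (hp x - hm (x - \<kappa>)) + T3 \<epsilon> (x - \<kappa>)) integrable_on {s..S}"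
        using T1 glue T3 by (intro integrable_add) (auto simp: integrable_on_def)
      show "(\<lambda>x. cmod (H (Complex x (- \<alpha> + \<epsilon>)) - H (Complex (x - \<kappa>) (- \<epsilon>)))) integrable_on {s..S}"
        by (intro integrable_continuous_interval continuous_on_norm cont)
      fix x
      have "H (Complex x (- \<alpha> + \<epsilon>)) - H (Complex (x - \<kappa>) (- \<epsilon>)) =
          (H (Complex x (- \<alpha> + \<epsilon>)) - hp x) + (hp x - hm (x - \<kappa>))
          - (H (Complex (x - \<kappa>) (- \<epsilon>)) - hm (x - \<kappa>))"
        by simp
      also have "cmod \<dots> \<le> cmod ((H (Complex x (- \<alpha> + \<epsilon>)) - hp x) + (hp x - hm (x - \<kappa>)))
          + T3 \<epsilon> (x - \<kappa>)"
        unfolding T3_def by (rule norm_triangle_ineq4)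
      also have "\<dots> \<le> T1 \<epsilon> x + cmod (hp x - hm (x - \<kappa>)) + T3 \<epsilon> (x - \<kappa>)"
        unfolding T1_def by (intro add_right_mono norm_triangle_ineq)
      finally show "cmod (H (Complex x (- \<alpha> + \<epsilon>)) - H (Complex (x - \<kappa>) (- \<epsilon>)))
          \<le> T1 \<epsilon> x + cmod (hp x - hm (x - \<kappa>)) + T3 \<epsilon> (x - \<kappa>)" .
    qed
    also have "\<dots> = integral {s..S} (T1 \<epsilon>) + integral {s..S} (\<lambda>x. cmod (hp x - hm (x - \<kappa>)))
        + integral {s..S} (\<lambda>x. T3 \<epsilon> (x - \<kappa>))"
      using T1 glue T3 by (simp add: integral_add integrable_add has_integral_integrable)
    also have "\<dots> = integral {s..S} (T1 \<epsilon>) + 0 + integral {s - \<kappa>..S - \<kappa>} (T3 \<epsilon>)"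
      using glue T3_eq by (simp add: integral_unique)
    moreover have "0 \<le> integral {s..S} (\<lambda>x. cmod (H (Complex x (- \<alpha> + \<epsilon>)) - H (Complex (x - \<kappa>) (- \<epsilon>))))"
      by (intro integral_nonneg integrable_continuous_interval continuous_on_norm cont) auto
    ultimately show ?case
      by simp
  qed
  then show ?thesis
    by (rule Lim_null_comparison) (use lim in simp)
qed

lemma kernel_near_edges:
  assumes "s \<le> S" and z: "- \<alpha> < Im z" "Im z < 0"
  obtains \<delta> K1 where "0 < \<delta>"
    and "\<And>\<epsilon>. \<bar>\<epsilon>\<bar> < \<delta> \<Longrightarrow> continuous_on {s..S} (\<lambda>x. kernel (Complex (x - \<kappa>) \<epsilon> - z))"
    and "\<And>\<epsilon> x. \<bar>\<epsilon>\<bar> < \<delta> \<Longrightarrow> x \<in> {s..S} \<Longrightarrow> cmod (kernel (Complex (x - \<kappa>) \<epsilon> - z)) \<le> K1"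
    and "((\<lambda>\<epsilon>. integral {s..S} (\<lambda>x. cmod (kernel (Complex (x - \<kappa>) \<epsilon> - z)
            - kernel (Complex (x - \<kappa>) (- \<epsilon>) - z)))) \<longlongrightarrow> 0) (at_right 0)"
proof -
  define \<delta> where "\<delta> = min (- Im z) (\<alpha> + Im z) / 2"
  have \<delta>: "0 < \<delta>" "\<delta> < - Im z" "\<delta> < \<alpha> + Im z"
    using z by (auto simp: \<delta>_def)
  define Q where "Q = cbox (Complex (s - \<kappa> - Re z) (- \<delta> - Im z)) (Complex (S - \<kappa> - Re z) (\<delta> - Im z))"
  have in_Q: "Complex (x - \<kappa>) \<epsilon> - z \<in> Q" if "x \<in> {s..S}" "\<bar>\<epsilon>\<bar> < \<delta>" for x \<epsilon>
    using that by (auto simp: Q_def in_cbox_complex_iff)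
  have "Q \<subseteq> {u. \<bar>Im u\<bar> < \<bar>Im (Complex \<kappa> (- \<alpha>))\<bar> \<and> u \<noteq> 0}"
    using \<delta> \<alpha>_pos by (auto simp: Q_def in_cbox_complex_iff)
  then have kernel_cont: "continuous_on Q kernel"
    using holomorphic_on_imp_continuous_on[OF holomorphic_on_periodic_kernel] continuous_on_subset
    by blast
  obtain K1 where K1: "\<And>u. u \<in> Q \<Longrightarrow> cmod (kernel u) \<le> K1"
    using compact_imp_bounded[OF compact_continuous_image[OF kernel_cont]]
    unfolding Q_def bounded_iff by auto
  have cont: "continuous_on {s..S} (\<lambda>x. kernel (Complex (x - \<kappa>) \<epsilon> - z))" if "\<bar>\<epsilon>\<bar> < \<delta>" for \<epsilon>
    using in_Q that by (intro continuous_on_compose2[OF kernel_cont] continuous_intros) auto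
  have dist: "dist (Complex (x - \<kappa>) \<epsilon> - z) (Complex (x - \<kappa>) (- \<epsilon>) - z) \<le> 2 * \<epsilon>"
    if "0 < \<epsilon>" for x \<epsilon>
  proof -
    have "(Complex (x - \<kappa>) \<epsilon> - z) - (Complex (x - \<kappa>) (- \<epsilon>) - z) = \<i> * of_real (2 * \<epsilon>)"
      by (simp add: complex_eq_iff)
    then show ?thesis
      using that by (simp add: dist_norm norm_mult)
  qed
  show thesis
  proof (rule that[OF \<delta>(1) cont K1[OF in_Q]])
    show "((\<lambda>\<epsilon>. integral {s..S} (\<lambda>x. cmod (kernel (Complex (x - \<kappa>) \<epsilon> - z)
        - kernel (Complex (x - \<kappa>) (- \<epsilon>) - z)))) \<longlongrightarrow> 0) (at_right 0)"
      using assms(1) in_Q \<delta>(1) dist cont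
      by (intro integral_uniformly_continuous_diff_tendsto_0[OF _ _ kernel_cont, where yb = \<delta> and c = 2])
        (auto simp: Q_def intro!: continuous_intros)
  qed
qed

text \<open>By periodicity of the kernel the two integrands carry the same kernel up to a uniformly
  small error, and their \<open>H\<close>-factors are glued by \<open>boundary_values_glue\<close>.\<close>
lemma top_minus_shifted_bottom:
  assumes "A + \<bar>\<kappa>\<bar> < s" and "s \<le> S" and z: "- \<alpha> < Im z" "Im z < 0"
  shows "((\<lambda>\<epsilon>. integral {s..S} (\<lambda>x. H (Complex x (- \<alpha> + \<epsilon>)) * kernel (Complex x (- \<alpha> + \<epsilon>) - z))
              - integral {s..S} (\<lambda>x. H (Complex (x - \<kappa>) (- \<epsilon>)) * kernel (Complex (x - \<kappa>) (- \<epsilon>) - z)))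
          \<longlongrightarrow> 0) (at_right 0)"
proof -
  obtain \<delta> K1 where \<delta>: "0 < \<delta>"
    and kernel_cont: "\<And>\<epsilon>. \<bar>\<epsilon>\<bar> < \<delta> \<Longrightarrow> continuous_on {s..S} (\<lambda>x. kernel (Complex (x - \<kappa>) \<epsilon> - z))"
    and K1: "\<And>\<epsilon> x. \<bar>\<epsilon>\<bar> < \<delta> \<Longrightarrow> x \<in> {s..S} \<Longrightarrow> cmod (kernel (Complex (x - \<kappa>) \<epsilon> - z)) \<le> K1"
    and kernel_glue: "((\<lambda>\<epsilon>. integral {s..S} (\<lambda>x. cmod (kernel (Complex (x - \<kappa>) \<epsilon> - z)
            - kernel (Complex (x - \<kappa>) (- \<epsilon>) - z)))) \<longlongrightarrow> 0) (at_right 0)"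
    using kernel_near_edges[OF assms(2) z] by blast
  define u1 where "u1 \<epsilon> x = Complex (x - \<kappa>) \<epsilon> - z" for \<epsilon> x
  define u2 where "u2 \<epsilon> x = Complex (x - \<kappa>) (- \<epsilon>) - z" for \<epsilon> x
  have "\<forall>\<^sub>F \<epsilon> in at_right 0. 0 < \<epsilon> \<and> \<epsilon> < \<delta> \<and> \<epsilon> < \<alpha>"
    using \<delta> \<alpha>_pos by (intro eventually_at_right_field[THEN iffD2] exI[of _ "min \<delta> \<alpha>"]) auto
  then have bound: "\<forall>\<^sub>F \<epsilon> in at_right 0.
      norm (integral {s..S} (\<lambda>x. H (Complex x (- \<alpha> + \<epsilon>)) * kernel (Complex x (- \<alpha> + \<epsilon>) - z))
              - integral {s..S} (\<lambda>x. H (Complex (x - \<kappa>) (- \<epsilon>)) * kernel (Complex (x - \<kappa>) (- \<epsilon>) - z)))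
        \<le> K1 * integral {s..S} (\<lambda>x. cmod (H (Complex x (- \<alpha> + \<epsilon>)) - H (Complex (x - \<kappa>) (- \<epsilon>))))
          + B * integral {s..S} (\<lambda>x. cmod (kernel (u1 \<epsilon> x) - kernel (u2 \<epsilon> x)))"
  proof eventually_elim
    case (elim \<epsilon>)
    define h1 where "h1 x = H (Complex x (- \<alpha> + \<epsilon>))" for x
    define h2 where "h2 x = H (Complex (x - \<kappa>) (- \<epsilon>))" for x
    have top: "Complex x (- \<alpha> + \<epsilon>) - z = u1 \<epsilon> x + Complex \<kappa> (- \<alpha>)" for x
      by (simp add: u1_def complex_eq_iff)
    have h1: "continuous_on {s..S} h1"
      unfolding h1_def using continuous_on_horizontal[of s 0 "- \<alpha> + \<epsilon>" S] assms elim \<delta> by simp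
    have h2: "continuous_on {s..S} h2"
      unfolding h2_def using continuous_on_horizontal[of s \<kappa> "- \<epsilon>" S] assms elim \<delta> by simp
    have k: "continuous_on {s..S} (\<lambda>x. kernel (u1 \<epsilon> x))" "continuous_on {s..S} (\<lambda>x. kernel (u2 \<epsilon> x))"
      using kernel_cont elim by (auto simp: u1_def u2_def)
    have bound: "cmod (h1 x * kernel (u1 \<epsilon> x) - h2 x * kernel (u2 \<epsilon> x))
        \<le> K1 * cmod (h1 x - h2 x) + B * cmod (kernel (u1 \<epsilon> x) - kernel (u2 \<epsilon> x))"
      if x: "x \<in> {s..S}" for x
    proof -
      have "h1 x * kernel (u1 \<epsilon> x) - h2 x * kernel (u2 \<epsilon> x)
          = (h1 x - h2 x) * kernel (u1 \<epsilon> x) + h2 x * (kernel (u1 \<epsilon> x) - kernel (u2 \<epsilon> x))"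
        by (simp add: algebra_simps)
      also have "cmod \<dots> \<le> cmod (h1 x - h2 x) * K1 + B * cmod (kernel (u1 \<epsilon> x) - kernel (u2 \<epsilon> x))"
        using K1[of \<epsilon> x] bounded[of "Complex (x - \<kappa>) (- \<epsilon>)"] x elim \<delta> assms
        by (intro order.trans[OF norm_triangle_ineq] add_mono)
          (auto simp: norm_mult u1_def h2_def half_strip_def intro!: mult_left_mono mult_right_mono)
      finally show ?thesis
        by (simp add: mult.commute)
    qed
    have "norm (integral {s..S} (\<lambda>x. h1 x * kernel (u1 \<epsilon> x)) - integral {s..S} (\<lambda>x. h2 x * kernel (u2 \<epsilon> x)))
        = norm (integral {s..S} (\<lambda>x. h1 x * kernel (u1 \<epsilon> x) - h2 x * kernel (u2 \<epsilon> x)))"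
      using h1 h2 k by (subst integral_diff) (auto intro!: integrable_continuous_interval continuous_intros)
    also have "\<dots> \<le> integral {s..S} (\<lambda>x. K1 * cmod (h1 x - h2 x) + B * cmod (kernel (u1 \<epsilon> x) - kernel (u2 \<epsilon> x)))"
      using h1 h2 k bound
      by (intro integral_norm_bound_integral integrable_continuous_interval continuous_intros) auto
    also have "\<dots> = K1 * integral {s..S} (\<lambda>x. cmod (h1 x - h2 x))
        + B * integral {s..S} (\<lambda>x. cmod (kernel (u1 \<epsilon> x) - kernel (u2 \<epsilon> x)))"
      using h1 h2 k
      by (simp add: integral_add integrable_continuous_interval continuous_intros integral_mult_right)
    finally show ?case
      unfolding top by (simp add: periodic_kernel_add_period[OF period_ne_0] h1_def h2_def u2_def)
  qed
  have "((\<lambda>\<epsilon>. K1 * integral {s..S} (\<lambda>x. cmod (H (Complex x (- \<alpha> + \<epsilon>)) - H (Complex (x - \<kappa>) (- \<epsilon>))))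
          + B * integral {s..S} (\<lambda>x. cmod (kernel (u1 \<epsilon> x) - kernel (u2 \<epsilon> x)))) \<longlongrightarrow> K1 * 0 + B * 0)
      (at_right 0)"
    unfolding u1_def u2_def by (intro tendsto_intros boundary_values_glue kernel_glue assms)
  then show ?thesis
    using Lim_null_comparison[OF bound] by simp
qed

lemma rectangle_formula:
  assumes "A < s" "s < Re z" "Re z < S" and "0 < \<epsilon>" "\<epsilon> < - Im z" "\<epsilon> < \<alpha> + Im z"
  defines "f \<equiv> \<lambda>w. H w * kernel (w - z)"
  shows "2 * pi * \<i> * H z =
           integral {s..S} (\<lambda>x. f (Complex x (- \<alpha> + \<epsilon>))) - integral {s..S} (\<lambda>x. f (Complex x (- \<epsilon>)))
           + contour_integral (linepath (Complex S (- \<alpha> + \<epsilon>)) (Complex S (- \<epsilon>))) f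
           + contour_integral (linepath (Complex s (- \<epsilon>)) (Complex s (- \<alpha> + \<epsilon>))) f"
proof -
  have z: "- \<alpha> < Im z" "Im z < 0"
    using assms by linarith+
  have rect: "cbox (Complex s (- \<alpha> + \<epsilon>)) (Complex S (- \<epsilon>)) \<subseteq> half_strip \<alpha> A"
    using assms by (auto simp: in_cbox_complex_iff half_strip_def)
  have z_in: "z \<in> box (Complex s (- \<alpha> + \<epsilon>)) (Complex S (- \<epsilon>))"
    using assms by (auto simp: in_box_complex_iff)
  have "(f has_contour_integral 2 * pi * \<i> * H z) (rectpath (Complex s (- \<alpha> + \<epsilon>)) (Complex S (- \<epsilon>)))"
    unfolding f_def using z
    by (intro Cauchy_periodic_kernel_rectpath[OF open_half_strip convex_half_strip holomorphic _ z_in rect])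
      (auto simp: half_strip_def)
  moreover have "path_image (rectpath (Complex s (- \<alpha> + \<epsilon>)) (Complex S (- \<epsilon>))) \<subseteq> half_strip \<alpha> A - {z}"
    using rect z_in by (auto simp: path_image_rectpath_cbox_minus_box in_box_complex_iff)
  then have "continuous_on (path_image (rectpath (Complex s (- \<alpha> + \<epsilon>)) (Complex S (- \<epsilon>)))) f"
    unfolding f_def using continuous_on_kernel_product[OF z] continuous_on_subset by blast
  ultimately show ?thesis
    using contour_integral_rectpath_sides[of s S "- \<alpha> + \<epsilon>" "- \<epsilon>" f] assms contour_integral_unique
    by fastforce
qed

text \<open>Besides the glued horizontal edges, only the two vertical sides and the two ends of the
  shifted lower edge contribute; they have lengths at most \<open>\<alpha>\<close> and \<open>\<bar>\<kappa>\<bar>\<close>.\<close>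
lemma rectangle_estimate:
  assumes "A + \<bar>\<kappa>\<bar> < s" "s < Re z" "Re z < S" "s + \<bar>\<kappa>\<bar> \<le> S - \<bar>\<kappa>\<bar>"
    and \<epsilon>: "0 < \<epsilon>" "\<epsilon> < - Im z" "\<epsilon> < \<alpha> + Im z"
    and left: "\<And>w. w \<in> half_strip \<alpha> A \<Longrightarrow> Re w \<le> s + \<bar>\<kappa>\<bar> \<Longrightarrow> cmod (H w * kernel (w - z)) \<le> Bl"
    and right: "\<And>w. - \<alpha> < Im w \<Longrightarrow> Im w < 0 \<Longrightarrow> S - \<bar>\<kappa>\<bar> \<le> Re w \<Longrightarrow>
                  cmod (H w * kernel (w - z)) \<le> Br"
  shows "2 * pi * cmod (H z)
           \<le> cmod (integral {s..S} (\<lambda>x. H (Complex x (- \<alpha> + \<epsilon>)) * kernel (Complex x (- \<alpha> + \<epsilon>) - z))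
                   - integral {s..S} (\<lambda>x. H (Complex (x - \<kappa>) (- \<epsilon>)) * kernel (Complex (x - \<kappa>) (- \<epsilon>) - z)))
             + (\<alpha> + \<bar>\<kappa>\<bar>) * (Bl + Br)"
proof -
  define f where "f w = H w * kernel (w - z)" for w
  define g where "g x = f (Complex x (- \<epsilon>))" for x
  define top where "top = integral {s..S} (\<lambda>x. f (Complex x (- \<alpha> + \<epsilon>)))"
  define shifted where "shifted = integral {s..S} (\<lambda>x. g (x - \<kappa>))"
  have z: "- \<alpha> < Im z" "Im z < 0"
    using \<epsilon> by linarith+
  have "cmod (f (Complex s (- \<epsilon>))) \<le> Bl" "cmod (f (Complex S (- \<epsilon>))) \<le> Br"
    using assms left[of "Complex s (- \<epsilon>)"] right[of "Complex S (- \<epsilon>)"]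
    by (auto simp: f_def half_strip_def)
  then have Bl: "0 \<le> Bl" and Br: "0 \<le> Br"
    by (meson norm_ge_zero order_trans)+
  have f_cont: "continuous_on (half_strip \<alpha> A - {z}) f"
    unfolding f_def using continuous_on_kernel_product[OF z] .
  have "continuous_on {s - \<bar>\<kappa>\<bar>..S + \<bar>\<kappa>\<bar>} g"
    unfolding g_def using assms
    by (intro continuous_on_compose2[OF f_cont] continuous_intros) (auto simp: half_strip_def)
  then have shift: "cmod (shifted - integral {s..S} g) \<le> \<bar>\<kappa>\<bar> * (Bl + Br)"
    unfolding shifted_def
    by (rule norm_integral_shift_diff_le[OF _ assms(4)])
      (use assms left right in \<open>auto simp: g_def f_def half_strip_def\<close>)
  have vertical: "cmod (contour_integral (linepath (Complex x y0) (Complex x y1)) f) \<le> M * \<alpha>"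
    if "y0 \<in> {- \<alpha> + \<epsilon>, - \<epsilon>}" "y1 \<in> {- \<alpha> + \<epsilon>, - \<epsilon>}" "A < x" "x \<noteq> Re z" "0 \<le> M"
      and "\<And>y. y \<in> closed_segment y0 y1 \<Longrightarrow> cmod (f (Complex x y)) \<le> M" for x y0 y1 M
  proof -
    have "closed_segment (Complex x y0) (Complex x y1) \<subseteq> half_strip \<alpha> A - {z}"
      using that \<epsilon> by (auto simp: closed_segment_same_Re closed_segment_eq_real_ivl half_strip_def split: if_splits)
    then have "cmod (contour_integral (linepath (Complex x y0) (Complex x y1)) f) \<le> M * \<bar>y1 - y0\<bar>"
      using that by (intro norm_contour_integral_vertical_le continuous_on_subset[OF f_cont])
    also have "\<dots> \<le> M * \<alpha>"
      using that \<epsilon> by (intro mult_left_mono) auto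
    finally show ?thesis .
  qed
  have right_edge: "cmod (contour_integral (linepath (Complex S (- \<alpha> + \<epsilon>)) (Complex S (- \<epsilon>))) f) \<le> Br * \<alpha>"
    using assms Br
    by (intro vertical) (auto simp: f_def closed_segment_eq_real_ivl intro!: right split: if_splits)
  have left_edge: "cmod (contour_integral (linepath (Complex s (- \<epsilon>)) (Complex s (- \<alpha> + \<epsilon>))) f) \<le> Bl * \<alpha>"
    using assms Bl
    by (intro vertical) (auto simp: f_def closed_segment_eq_real_ivl half_strip_def intro!: left split: if_splits)
  have "2 * pi * cmod (H z) = cmod (2 * pi * \<i> * H z)"
    by (simp add: norm_mult)
  also have "\<dots> = cmod ((top - shifted) + (shifted - integral {s..S} g)
      + contour_integral (linepath (Complex S (- \<alpha> + \<epsilon>)) (Complex S (- \<epsilon>))) f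
      + contour_integral (linepath (Complex s (- \<epsilon>)) (Complex s (- \<alpha> + \<epsilon>))) f)"
    using rectangle_formula[of s z S \<epsilon>] assms unfolding top_def g_def f_def by simp
  also have "\<dots> \<le> cmod (top - shifted) + cmod (shifted - integral {s..S} g)
      + cmod (contour_integral (linepath (Complex S (- \<alpha> + \<epsilon>)) (Complex S (- \<epsilon>))) f)
      + cmod (contour_integral (linepath (Complex s (- \<epsilon>)) (Complex s (- \<alpha> + \<epsilon>))) f)"
    by (intro order_trans[OF norm_triangle_ineq add_right_mono]) simp
  finally have "2 * pi * cmod (H z) \<le> cmod (top - shifted) + \<bar>\<kappa>\<bar> * (Bl + Br) + Br * \<alpha> + Bl * \<alpha>"
    using shift right_edge left_edge by linarith
  then show ?thesis
    unfolding top_def shifted_def g_def f_def by (simp add: algebra_simps)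
qed

lemma kernel_bounds:
  obtains L C0 where "L > 0"
    and "\<And>u. \<bar>Im u\<bar> \<le> \<alpha> \<Longrightarrow> L \<le> Re u \<Longrightarrow> cmod (kernel u) \<le> 2 * cmod (2 * pi * \<i> / Complex \<kappa> (- \<alpha>))"
    and "\<And>w z. w \<in> half_strip \<alpha> A \<Longrightarrow> Re w \<le> A + 2 * \<bar>\<kappa>\<bar> + 1 \<Longrightarrow> - \<alpha> < Im z \<Longrightarrow> Im z < 0 \<Longrightarrow>
           Re w + L \<le> Re z \<Longrightarrow> cmod (kernel (w - z)) \<le> C0 * cmod (exp (2 * pi * \<i> / Complex \<kappa> (- \<alpha>) * z))"
proof -
  define c where "c = 2 * pi * \<i> / Complex \<kappa> (- \<alpha>)"
  obtain L where L: "L > 0"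
    and right: "\<And>u. \<bar>Im u\<bar> \<le> \<alpha> \<Longrightarrow> L \<le> Re u \<Longrightarrow> cmod (kernel u) \<le> 2 * cmod c"
    and left: "\<And>u. \<bar>Im u\<bar> \<le> \<alpha> \<Longrightarrow> Re u \<le> - L \<Longrightarrow> cmod (kernel u) \<le> 2 * cmod c * exp (- Re (c * u))"
    using periodic_kernel_decay[of "Complex \<kappa> (- \<alpha>)"] \<alpha>_pos unfolding c_def by auto
  define W where "W = cbox (Complex A (- \<alpha>)) (Complex (A + 2 * \<bar>\<kappa>\<bar> + 1) 0)"
  have "continuous_on W (\<lambda>w. exp (- Re (c * w)))"
    by (intro continuous_intros)
  then have "bounded ((\<lambda>w. exp (- Re (c * w))) ` W)"
    unfolding W_def by (intro compact_imp_bounded compact_continuous_image compact_cbox)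
  then obtain E0 where E0: "\<And>w. w \<in> W \<Longrightarrow> exp (- Re (c * w)) \<le> E0"
    unfolding bounded_iff by force
  show thesis
  proof (rule that[OF L right[unfolded c_def]])
    fix w z assume w: "w \<in> half_strip \<alpha> A" "Re w \<le> A + 2 * \<bar>\<kappa>\<bar> + 1"
      and z: "- \<alpha> < Im z" "Im z < 0" "Re w + L \<le> Re z"
    have "cmod (kernel (w - z)) \<le> 2 * cmod c * exp (- Re (c * (w - z)))"
      using w z by (intro left) (auto simp: half_strip_def)
    also have "exp (- Re (c * (w - z))) = exp (- Re (c * w)) * cmod (exp (c * z))"
      using exp_add[of "- Re (c * w)" "Re (c * z)"] by (simp add: algebra_simps)
    also have "2 * cmod c * (exp (- Re (c * w)) * cmod (exp (c * z))) \<le> 2 * cmod c * (E0 * cmod (exp (c * z)))"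
      using w E0[of w] by (intro mult_left_mono mult_right_mono) (auto simp: W_def half_strip_def in_cbox_complex_iff)
    finally show "cmod (kernel (w - z)) \<le> (2 * cmod c * E0) * cmod (exp (2 * pi * \<i> / Complex \<kappa> (- \<alpha>) * z))"
      by (simp add: c_def mult.assoc)
  qed
qed

lemma estimate_up_to_error:
  assumes z: "- \<alpha> < Im z" "Im z < 0" "A + 2 * \<bar>\<kappa>\<bar> + 1 < Re z" and "L > 0" and "\<eta> > 0"
    and right_kernel: "\<And>w. - \<alpha> < Im w \<Longrightarrow> Im w < 0 \<Longrightarrow> Re z + L \<le> Re w \<Longrightarrow> cmod (kernel (w - z)) \<le> Kr"
    and left_kernel: "\<And>w. w \<in> half_strip \<alpha> A \<Longrightarrow> Re w \<le> A + 2 * \<bar>\<kappa>\<bar> + 1 \<Longrightarrow> cmod (kernel (w - z)) \<le> Kl"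
  shows "2 * pi * cmod (H z) \<le> (\<alpha> + \<bar>\<kappa>\<bar>) * (B * Kl + \<eta> * Kr)"
proof -
  define s where "s = A + \<bar>\<kappa>\<bar> + 1"
  obtain R where R: "\<And>w. w \<in> half_strip \<alpha> R \<Longrightarrow> cmod (H w) \<le> \<eta>"
    using vanishing[OF \<open>\<eta> > 0\<close>] by blast
  define S where "S = max (R + \<bar>\<kappa>\<bar>) (Re z + L + \<bar>\<kappa>\<bar>) + 1"
  have left: "cmod (H w * kernel (w - z)) \<le> B * Kl"
    if "w \<in> half_strip \<alpha> A" "Re w \<le> s + \<bar>\<kappa>\<bar>" for w
  proof -
    have "cmod (H w) \<le> B" "cmod (kernel (w - z)) \<le> Kl"
      using that bounded left_kernel by (auto simp: s_def)
    moreover have "0 \<le> B"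
      using \<open>cmod (H w) \<le> B\<close> norm_ge_zero order_trans by blast
    ultimately show ?thesis
      by (simp add: norm_mult mult_mono)
  qed
  have right: "cmod (H w * kernel (w - z)) \<le> \<eta> * Kr"
    if "- \<alpha> < Im w" "Im w < 0" "S - \<bar>\<kappa>\<bar> \<le> Re w" for w
  proof -
    have "cmod (H w) \<le> \<eta>" "cmod (kernel (w - z)) \<le> Kr"
      using that R right_kernel by (auto simp: S_def half_strip_def)
    then show ?thesis
      using \<open>\<eta> > 0\<close> by (simp add: norm_mult mult_mono)
  qed
  have "\<forall>\<^sub>F \<epsilon> in at_right 0. 0 < \<epsilon> \<and> \<epsilon> < min (- Im z) (\<alpha> + Im z)"
    using z by (intro eventually_at_right_field[THEN iffD2] exI[of _ "min (- Im z) (\<alpha> + Im z)"]) auto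
  then have "\<forall>\<^sub>F \<epsilon> in at_right 0. 2 * pi * cmod (H z) - (\<alpha> + \<bar>\<kappa>\<bar>) * (B * Kl + \<eta> * Kr)
      \<le> cmod (integral {s..S} (\<lambda>x. H (Complex x (- \<alpha> + \<epsilon>)) * kernel (Complex x (- \<alpha> + \<epsilon>) - z))
              - integral {s..S} (\<lambda>x. H (Complex (x - \<kappa>) (- \<epsilon>)) * kernel (Complex (x - \<kappa>) (- \<epsilon>) - z)))"
  proof eventually_elim
    case (elim \<epsilon>)
    have "2 * pi * cmod (H z)
        \<le> cmod (integral {s..S} (\<lambda>x. H (Complex x (- \<alpha> + \<epsilon>)) * kernel (Complex x (- \<alpha> + \<epsilon>) - z))
              - integral {s..S} (\<lambda>x. H (Complex (x - \<kappa>) (- \<epsilon>)) * kernel (Complex (x - \<kappa>) (- \<epsilon>) - z)))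
          + (\<alpha> + \<bar>\<kappa>\<bar>) * (B * Kl + \<eta> * Kr)"
      using z elim \<open>L > 0\<close>
      by (intro rectangle_estimate left right) (auto simp: s_def S_def)
    then show ?case
      by simp
  qed
  moreover have "s \<le> S"
    using z \<open>L > 0\<close> by (simp add: s_def S_def)
  then have "((\<lambda>\<epsilon>. cmod (integral {s..S} (\<lambda>x. H (Complex x (- \<alpha> + \<epsilon>)) * kernel (Complex x (- \<alpha> + \<epsilon>) - z))
              - integral {s..S} (\<lambda>x. H (Complex (x - \<kappa>) (- \<epsilon>)) * kernel (Complex (x - \<kappa>) (- \<epsilon>) - z))))
      \<longlongrightarrow> 0) (at_right 0)"
    using z by (intro tendsto_norm_zero top_minus_shifted_bottom) (auto simp: s_def)
  ultimately have "2 * pi * cmod (H z) - (\<alpha> + \<bar>\<kappa>\<bar>) * (B * Kl + \<eta> * Kr) \<le> 0"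
    by (intro tendsto_lowerbound) auto
  then show ?thesis
    by simp
qed

theorem exp_bound:
  "\<exists>C R. \<forall>z \<in> strip \<alpha>. R \<le> Re z \<longrightarrow> cmod (H z) \<le> C * cmod (exp (2 * pi * \<i> / Complex \<kappa> (- \<alpha>) * z))"
proof -
  obtain L C0 where L: "L > 0"
    and right: "\<And>u. \<bar>Im u\<bar> \<le> \<alpha> \<Longrightarrow> L \<le> Re u \<Longrightarrow> cmod (kernel u) \<le> 2 * cmod (2 * pi * \<i> / Complex \<kappa> (- \<alpha>))"
    and left: "\<And>w z. w \<in> half_strip \<alpha> A \<Longrightarrow> Re w \<le> A + 2 * \<bar>\<kappa>\<bar> + 1 \<Longrightarrow> - \<alpha> < Im z \<Longrightarrow> Im z < 0 \<Longrightarrow>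
       Re w + L \<le> Re z \<Longrightarrow> cmod (kernel (w - z)) \<le> C0 * cmod (exp (2 * pi * \<i> / Complex \<kappa> (- \<alpha>) * z))"
    using kernel_bounds by blast
  define R where "R = A + 2 * \<bar>\<kappa>\<bar> + 1 + L"
  have "cmod (H z) \<le> (\<alpha> + \<bar>\<kappa>\<bar>) * B * C0 / (2 * pi) * cmod (exp (2 * pi * \<i> / Complex \<kappa> (- \<alpha>) * z))"
    if z: "z \<in> strip \<alpha>" "R \<le> Re z" for z
  proof -
    let ?Kl = "C0 * cmod (exp (2 * pi * \<i> / Complex \<kappa> (- \<alpha>) * z))"
    let ?Kr = "2 * cmod (2 * pi * \<i> / Complex \<kappa> (- \<alpha>))"
    have "\<forall>\<^sub>F \<eta> in at_right 0. 2 * pi * cmod (H z) \<le> (\<alpha> + \<bar>\<kappa>\<bar>) * (B * ?Kl + \<eta> * ?Kr)"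
      unfolding eventually_at_right_field
    proof (intro exI[of _ 1] conjI allI impI)
      fix \<eta> :: real assume "0 < \<eta>" "\<eta> < 1"
      then show "2 * pi * cmod (H z) \<le> (\<alpha> + \<bar>\<kappa>\<bar>) * (B * ?Kl + \<eta> * ?Kr)"
        using z L \<alpha>_pos
        by (intro estimate_up_to_error[where L = L] right left) (auto simp: R_def strip_def abs_le_iff)
    qed simp
    moreover have "((\<lambda>\<eta>. (\<alpha> + \<bar>\<kappa>\<bar>) * (B * ?Kl + \<eta> * ?Kr)) \<longlongrightarrow> (\<alpha> + \<bar>\<kappa>\<bar>) * (B * ?Kl + 0 * ?Kr)) (at_right 0)"
      by (intro tendsto_intros)
    ultimately have "2 * pi * cmod (H z) \<le> (\<alpha> + \<bar>\<kappa>\<bar>) * (B * ?Kl)"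
      using tendsto_lowerbound by fastforce
    then show ?thesis
      by (simp add: field_simps)
  qed
  then show ?thesis
    by blast
qed

end

lemma inverse_Re_decay:
  assumes A: "0 < A" and decay: "\<And>w. w \<in> half_strip \<alpha> A \<Longrightarrow> cmod (F w) \<le> K / Re w"
  shows "\<And>w. w \<in> half_strip \<alpha> A \<Longrightarrow> cmod (F w) \<le> \<bar>K\<bar> / A"
    and "\<And>e. 0 < e \<Longrightarrow> \<exists>R. \<forall>w \<in> half_strip \<alpha> R. cmod (F w) \<le> e"
proof -
  fix w assume w: "w \<in> half_strip \<alpha> A"
  then have "A < Re w"
    by (simp add: half_strip_def)
  then have "K / Re w \<le> \<bar>K\<bar> / A"
    using A by (intro order_trans[OF divide_right_mono[of K "\<bar>K\<bar>"] divide_left_mono]) auto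
  then show "cmod (F w) \<le> \<bar>K\<bar> / A"
    using decay[OF w] by linarith
next
  fix e :: real assume e: "0 < e"
  show "\<exists>R. \<forall>w \<in> half_strip \<alpha> R. cmod (F w) \<le> e"
  proof (intro exI ballI)
    fix w assume w: "w \<in> half_strip \<alpha> (A + \<bar>K\<bar> / e)"
    moreover have "0 \<le> \<bar>K\<bar> / e"
      using e by simp
    ultimately have w_A: "w \<in> half_strip \<alpha> A" and "\<bar>K\<bar> / e < Re w"
      using A by (auto simp: half_strip_def)
    then have "\<bar>K\<bar> \<le> e * Re w" and "0 < Re w"
      using e A by (auto simp: divide_less_eq half_strip_def mult.commute)
    then have "K / Re w \<le> e"
      by (simp add: divide_le_eq)
    then show "cmod (F w) \<le> e"
      using decay[OF w_A] by linarith
  qed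
qed

lemma end_estimate:
  fixes \<Xi> G :: "complex \<Rightarrow> complex" and \<Xi>m \<Xi>p :: "real \<Rightarrow> complex"
  assumes \<alpha>: "0 < \<alpha>" and A: "0 < A"
    and \<Xi>_holo: "\<Xi> holomorphic_on half_strip \<alpha> A" and G_holo: "G holomorphic_on half_strip \<alpha> A"
    and G_cont: "continuous_on {w. - \<alpha> \<le> Im w \<and> Im w \<le> 0 \<and> A < Re w} G"
    and decay: "\<And>w. w \<in> half_strip \<alpha> A \<Longrightarrow> cmod (\<Xi> w - C' + G w) \<le> K / Re w"
    and L2m: "\<And>a b. A < a \<Longrightarrow> L2_on {a..b} \<Xi>m" and L2p: "\<And>a b. A < a \<Longrightarrow> L2_on {a..b} \<Xi>p"
    and lower: "\<And>a b. A < a \<Longrightarrow>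
      ((\<lambda>y. integral {a..b} (\<lambda>x. (cmod (\<Xi> (Complex x (- y)) - \<Xi>m x))\<^sup>2)) \<longlongrightarrow> 0) (at_right 0)"
    and upper: "\<And>a b. A < a \<Longrightarrow>
      ((\<lambda>y. integral {a..b} (\<lambda>x. (cmod (\<Xi> (Complex x (- \<alpha> + y)) - \<Xi>p x))\<^sup>2)) \<longlongrightarrow> 0) (at_right 0)"
    and jump: "negligible {x. A < x \<and> \<Xi>p x + G (Complex x (- \<alpha>)) \<noteq> \<Xi>m (x - \<kappa>) + G (Complex (x - \<kappa>) 0)}"
  shows "\<exists>C R. \<forall>z \<in> strip \<alpha>. R \<le> Re z \<longrightarrow>
           cmod (\<Xi> z - C' + G z) \<le> C * cmod (exp (2 * pi * \<i> / Complex \<kappa> (- \<alpha>) * z))"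
proof -
  define hm where "hm x = \<Xi>m x - C' + G (Complex x 0)" for x
  define hp where "hp x = \<Xi>p x - C' + G (Complex x (- \<alpha>))" for x
  have G_line: "continuous_on {a..b} (\<lambda>x. G (Complex x y))" if "A < a" "- \<alpha> \<le> y" "y \<le> 0" for a b y
  proof (rule continuous_on_compose2[OF G_cont])
    show "continuous_on {a..b} (\<lambda>x. Complex x y)"
      by (intro continuous_intros)
  qed (use that in auto)
  have boundary_integrable: "(\<lambda>x. \<phi> x - C' + G (Complex x y)) absolutely_integrable_on {a..b}"
    if "L2_on {a..b} \<phi>" "A < a" "- \<alpha> \<le> y" "y \<le> 0" for \<phi> a b y
  proof -
    have "(\<lambda>x. G (Complex x y) - C') absolutely_integrable_on {a..b}"
      using G_line[OF that(2-4)] by (intro absolutely_integrable_continuous_real continuous_intros)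
    from set_integral_add(1)[OF L2_on_imp_absolutely_integrable[OF that(1)] this]
    show ?thesis
      by (simp add: algebra_simps)
  qed
  have \<Xi>_line: "continuous_on {a..b} (\<lambda>x. \<Xi> (Complex x y))" if "A < a" "- \<alpha> < y" "y < 0" for a b y
  proof (rule continuous_on_compose2[OF holomorphic_on_imp_continuous_on[OF \<Xi>_holo]])
    show "continuous_on {a..b} (\<lambda>x. Complex x y)"
      by (intro continuous_intros)
  qed (use that in \<open>auto simp: half_strip_def\<close>)
  interpret half_strip_gluing \<alpha> \<kappa> A "\<bar>K\<bar> / A" "\<lambda>w. \<Xi> w - C' + G w" hm hp
  proof
    show "(\<lambda>w. \<Xi> w - C' + G w) holomorphic_on half_strip \<alpha> A"
      using \<Xi>_holo G_holo by (intro holomorphic_intros)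
  next
    show "cmod (\<Xi> w - C' + G w) \<le> \<bar>K\<bar> / A" if "w \<in> half_strip \<alpha> A" for w
      using inverse_Re_decay(1)[OF A decay that] .
  next
    show "\<exists>R. \<forall>w \<in> half_strip \<alpha> R. cmod (\<Xi> w - C' + G w) \<le> e" if "0 < e" for e
      using inverse_Re_decay(2)[OF A decay that] .
  next
    show "hm absolutely_integrable_on {a..b}" "hp absolutely_integrable_on {a..b}" if "A < a" for a b
      unfolding hm_def hp_def using that \<alpha> L2m L2p by (auto intro!: boundary_integrable)
  next
    fix a b assume ab: "A < a" "a \<le> b"
    have G_box: "continuous_on (cbox (Complex a (- \<alpha>)) (Complex b 0)) G"
      by (rule continuous_on_subset[OF G_cont]) (use ab in \<open>auto simp: in_cbox_complex_iff\<close>)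
    have dist_vertical: "dist (Complex x u) (Complex x v) = \<bar>u - v\<bar>" for x u v
      by (simp add: dist_norm cmod_def)
    have "((\<lambda>y. integral {a..b} (\<lambda>x. cmod ((\<Xi> (Complex x (- y)) + G (Complex x (- y)))
        - (\<Xi>m x + G (Complex x 0))))) \<longlongrightarrow> 0) (at_right 0)"
    proof (rule boundary_value_L1_tendsto[OF ab(2) \<alpha> L2m[OF ab(1)] compact_cbox G_box])
      show "((\<lambda>y. integral {a..b} (\<lambda>x. (cmod (\<Xi> (Complex x (- y)) - \<Xi>m x))\<^sup>2)) \<longlongrightarrow> 0) (at_right 0)"
        by (rule lower[OF ab(1)])
    qed (use ab \<Xi>_line in \<open>auto simp: in_cbox_complex_iff dist_vertical intro!: continuous_intros\<close>)
    then show "((\<lambda>y. integral {a..b} (\<lambda>x. cmod (\<Xi> (Complex x (- y)) - C' + G (Complex x (- y)) - hm x)))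
        \<longlongrightarrow> 0) (at_right 0)"
      by (simp add: hm_def algebra_simps)
    have "((\<lambda>y. integral {a..b} (\<lambda>x. cmod ((\<Xi> (Complex x (- \<alpha> + y)) + G (Complex x (- \<alpha> + y)))
        - (\<Xi>p x + G (Complex x (- \<alpha>)))))) \<longlongrightarrow> 0) (at_right 0)"
    proof (rule boundary_value_L1_tendsto[OF ab(2) \<alpha> L2p[OF ab(1)] compact_cbox G_box])
      show "((\<lambda>y. integral {a..b} (\<lambda>x. (cmod (\<Xi> (Complex x (- \<alpha> + y)) - \<Xi>p x))\<^sup>2)) \<longlongrightarrow> 0) (at_right 0)"
        by (rule upper[OF ab(1)])
    qed (use ab \<Xi>_line in \<open>auto simp: in_cbox_complex_iff dist_vertical intro!: continuous_intros\<close>)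
    then show "((\<lambda>y. integral {a..b} (\<lambda>x. cmod (\<Xi> (Complex x (- \<alpha> + y)) - C' + G (Complex x (- \<alpha> + y)) - hp x)))
        \<longlongrightarrow> 0) (at_right 0)"
      by (simp add: hp_def algebra_simps)
  next
    show "negligible {x. A < x \<and> hp x \<noteq> hm (x - \<kappa>)}"
      using jump by (simp add: hp_def hm_def algebra_simps)
  qed (fact \<alpha>)
  show ?thesis
    by (rule exp_bound)
qed

section \<open>The two ends of the strip\<close>

lemma AE_lborel_imp_negligible:
  assumes "AE x in lborel. P x"
  shows "negligible {x. \<not> P x}"
  using AE_completion[OF assms] eventually_ae_filter_negligible negligible_subset by blast

lemma negligible_affine_preimage:
  fixes N :: "real set"
  assumes "negligible N" and "m \<noteq> 0"
  shows "negligible {x. m * x + c \<in> N}"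
proof -
  have "{x. m * x + c \<in> N} = (\<lambda>y. (1 / m) * y + (- c / m)) ` N"
  proof (intro set_eqI iffI)
    fix x assume "x \<in> {x. m * x + c \<in> N}"
    then show "x \<in> (\<lambda>y. (1 / m) * y + (- c / m)) ` N"
      using assms(2) by (intro image_eqI[of _ _ "m * x + c"]) (auto simp: field_simps)
  qed (use assms(2) in \<open>auto simp: field_simps\<close>)
  then show ?thesis
    using negligible_affine_image[OF assms(1), of "1 / m" "- c / m"] by metis
qed

lemma continuous_on_smooth_upto:
  assumes "smooth_upto A f"
  shows "continuous_on A f"
proof -
  obtain U h where "A \<subseteq> U" "smooth_on U h" "\<forall>x\<in>A. h x = f x"
    using assms unfolding smooth_upto_def by blast
  moreover from \<open>smooth_on U h\<close> obtain h' where "\<forall>x\<in>U. (h has_derivative h' x) (at x)"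
    by (cases rule: smooth_on.cases) auto
  ultimately have "continuous_on A h"
    by (intro continuous_at_imp_continuous_on) (auto intro: has_derivative_continuous)
  then show ?thesis
    by (rule continuous_on_eq) (use \<open>\<forall>x\<in>A. h x = f x\<close> in auto)
qed

lemma closed_strip_subset_closure:
  assumes "\<alpha> > 0"
  shows "{w. - \<alpha> \<le> Im w \<and> Im w \<le> 0} \<subseteq> closure (strip \<alpha>)"
proof
  fix w assume w: "w \<in> {w. - \<alpha> \<le> Im w \<and> Im w \<le> 0}"
  define B where "B = box (Complex (Re w - 1) (- \<alpha>)) (Complex (Re w + 1) 0)"
  have "Complex (Re w) (- \<alpha> / 2) \<in> B"
    using assms by (auto simp: B_def in_box_complex_iff)
  then have "closure B = cbox (Complex (Re w - 1) (- \<alpha>)) (Complex (Re w + 1) 0)"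
    unfolding B_def by (intro closure_box) blast
  then have "w \<in> closure B"
    using w by (auto simp: in_cbox_complex_iff)
  moreover have "B \<subseteq> strip \<alpha>"
    by (auto simp: B_def strip_def in_box_complex_iff)
  ultimately show "w \<in> closure (strip \<alpha>)"
    using closure_mono by blast
qed

lemma norm_le_of_inverse_expansion:
  fixes X C1 w :: complex
  assumes r: "r \<ge> 1" and "cmod w \<ge> r" and X: "cmod (X - C1 / w) \<le> Ca / (cmod w)\<^sup>2"
  shows "cmod X \<le> (cmod C1 + \<bar>Ca\<bar>) / r"
proof -
  have w: "cmod w > 0" "r \<le> (cmod w)\<^sup>2"
    using assms power_increasing[of 1 2 "cmod w"] by (auto simp: power2_eq_square)
  have "cmod X \<le> cmod (X - C1 / w) + cmod (C1 / w)"
    by (metis diff_add_cancel norm_triangle_ineq)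
  also have "\<dots> \<le> \<bar>Ca\<bar> / (cmod w)\<^sup>2 + cmod C1 / cmod w"
    using X w by (intro add_mono) (auto simp: norm_divide intro: order_trans[OF _ divide_right_mono])
  also have "\<dots> \<le> \<bar>Ca\<bar> / r + cmod C1 / r"
    using assms w by (intro add_mono divide_left_mono) auto
  finally show ?thesis
    by (simp add: add_divide_distrib)
qed

lemma exp_neg_le_inverse:
  fixes t :: real
  assumes "0 < t"
  shows "exp (- t) \<le> 1 / t"
proof -
  have "t \<le> exp t"
    using exp_ge_add_one_self[of t] by linarith
  then show ?thesis
    using assms by (simp add: exp_minus field_simps)
qed

lemma norm_add_le_inverse:
  fixes X Y C1 w :: complex
  assumes "1 \<le> r" and "r \<le> cmod w" and "cmod (X - C1 / w) \<le> Ca / (cmod w)\<^sup>2"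
    and "0 < \<rho>" and Y: "cmod Y \<le> CG * exp (- \<rho> * r)"
  shows "cmod (X + Y) \<le> (cmod C1 + \<bar>Ca\<bar> + \<bar>CG\<bar> / \<rho>) / r"
proof -
  have "cmod Y \<le> \<bar>CG\<bar> * exp (- (\<rho> * r))"
    using Y by (simp add: abs_ge_self mult_right_mono order_trans)
  also have "\<dots> \<le> \<bar>CG\<bar> * (1 / (\<rho> * r))"
    using assms by (intro mult_left_mono exp_neg_le_inverse) auto
  finally have "cmod Y \<le> \<bar>CG\<bar> / \<rho> / r"
    by simp
  moreover have "cmod X \<le> (cmod C1 + \<bar>Ca\<bar>) / r"
    using assms by (intro norm_le_of_inverse_expansion)
  ultimately show ?thesis
    using norm_triangle_ineq[of X Y] by (simp add: add_divide_distrib)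
qed

lemma rate_eq_periodic_frequency:
  assumes "\<alpha> > 0"
  shows "(2 * of_real pi / of_real \<alpha>) * ((- \<i> * of_real \<alpha>) / (- \<i> * of_real \<alpha> + of_real \<kappa>))
           = - (2 * pi * \<i> / Complex \<kappa> (- \<alpha>))"
proof -
  have "- \<i> * of_real \<alpha> + of_real \<kappa> = Complex \<kappa> (- \<alpha>)" "Complex \<kappa> (- \<alpha>) \<noteq> 0"
    using assms by (simp_all add: complex_eq_iff)
  then show ?thesis
    using assms by (simp add: field_simps)
qed

locale two_sided_problem =
  fixes \<alpha> \<kappa>m \<kappa>p M \<rho> CG RG Ca Ra :: real
    and g :: "real \<Rightarrow> real" and Gc :: "real \<Rightarrow> complex" and \<G> \<Xi> :: "complex \<Rightarrow> complex"
    and \<Xi>m \<Xi>p :: "real \<Rightarrow> complex" and C\<Xi> Cm1 :: complex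
  assumes \<alpha>: "\<alpha> > 0" and M: "M > 0" and \<rho>: "\<rho> > 0"
    and g_left: "\<forall>x. x \<le> - M \<longrightarrow> g x = x + \<kappa>m"
    and g_right: "\<forall>x. x \<ge> M \<longrightarrow> g x = x + \<kappa>p"
    and Gc_supp: "\<forall>x. \<bar>x\<bar> > M \<longrightarrow> Gc x = 0"
    and G_cont: "continuous_on (closure (strip \<alpha>)) \<G>"
    and G_holo: "\<G> holomorphic_on (strip \<alpha> \<inter> {z. \<bar>Re z\<bar> > M / 2})"
    and G_decay: "\<forall>z \<in> closure (strip \<alpha>) \<inter> {z. \<bar>Re z\<bar> > M / 2}.
            (Re z \<ge> RG \<longrightarrow> cmod (\<G> z) \<le> CG * cmod (exp (- of_real \<rho> * z))) \<and>
            (Re z \<le> - RG \<longrightarrow> cmod (\<G> z) \<le> CG * cmod (exp (of_real \<rho> * z)))"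
    and Xi_holo: "\<Xi> holomorphic_on strip \<alpha>"
    and Xi_bv_lower: "\<forall>a b. ((\<lambda>y. integral {a..b} (\<lambda>x. (cmod (\<Xi> (Complex x (- y)) - \<Xi>m x))\<^sup>2))
                              \<longlongrightarrow> 0) (at_right 0)"
    and Xi_bv_upper: "\<forall>a b. ((\<lambda>y. integral {a..b} (\<lambda>x. (cmod (\<Xi> (Complex x (- \<alpha> + y)) - \<Xi>p x))\<^sup>2))
                              \<longlongrightarrow> 0) (at_right 0)"
    and Xi_L2m: "L2_loc \<Xi>m"
    and Xi_L2p: "L2_loc (\<lambda>x. \<Xi>p (g x))"
    and Xi_jump: "AE x in lborel. \<Xi>p (g x) = \<Xi>m x + (Gc x + \<G> (of_real x) - \<G> (of_real (g x) - \<i> * of_real \<alpha>))"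
    and Xi_asym: "\<forall>z \<in> strip \<alpha>.
            (Re z \<ge> Ra \<longrightarrow> cmod (\<Xi> z - Cm1 / z) \<le> Ca / (cmod z)\<^sup>2) \<and>
            (Re z \<le> - Ra \<longrightarrow> cmod (\<Xi> z - C\<Xi> - Cm1 / z) \<le> Ca / (cmod z)\<^sup>2)"
begin

definition A0 :: real where
  "A0 = \<bar>Ra\<bar> + \<bar>RG\<bar> + M + \<bar>\<kappa>p\<bar> + \<bar>\<kappa>m\<bar> + 1"

definition K0 :: real where
  "K0 = cmod Cm1 + \<bar>Ca\<bar> + \<bar>CG\<bar> / \<rho>"

lemma A0: "1 \<le> A0" "Ra \<le> A0" "RG \<le> A0" "M + \<bar>\<kappa>p\<bar> < A0" "M + \<bar>\<kappa>m\<bar> < A0"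
  using M by (auto simp: A0_def)

lemma half_strip_A0_subset: "half_strip \<alpha> A0 \<subseteq> strip \<alpha> \<inter> {z. \<bar>Re z\<bar> > M / 2}"
  using A0 M by (auto simp: half_strip_def strip_def)

lemma closed_half_strip_A0_subset:
  "{w. - \<alpha> \<le> Im w \<and> Im w \<le> 0 \<and> A0 < Re w} \<subseteq> closure (strip \<alpha>) \<inter> {z. \<bar>Re z\<bar> > M / 2}"
  using A0 M closed_strip_subset_closure[OF \<alpha>] by auto

lemma jump_negligible:
  "negligible {x. \<Xi>p (g x) \<noteq> \<Xi>m x + (Gc x + \<G> (of_real x) - \<G> (of_real (g x) - \<i> * of_real \<alpha>))}"
  using AE_lborel_imp_negligible[OF Xi_jump] by simp

lemma right_jump_negligible:
  "negligible {x. A0 < x \<and> \<Xi>p x + \<G> (Complex x (- \<alpha>)) \<noteq> \<Xi>m (x - \<kappa>p) + \<G> (Complex (x - \<kappa>p) 0)}"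
proof -
  have "{x. A0 < x \<and> \<Xi>p x + \<G> (Complex x (- \<alpha>)) \<noteq> \<Xi>m (x - \<kappa>p) + \<G> (Complex (x - \<kappa>p) 0)}
      \<subseteq> {x. 1 * x + - \<kappa>p \<in> {x. \<Xi>p (g x) \<noteq> \<Xi>m x + (Gc x + \<G> (of_real x) - \<G> (of_real (g x) - \<i> * of_real \<alpha>))}}"
  proof safe
    fix x assume x: "A0 < x" and ne: "\<Xi>p x + \<G> (Complex x (- \<alpha>)) \<noteq> \<Xi>m (x - \<kappa>p) + \<G> (Complex (x - \<kappa>p) 0)"
      and eq: "\<Xi>p (g (1 * x + - \<kappa>p)) = \<Xi>m (1 * x + - \<kappa>p) + (Gc (1 * x + - \<kappa>p)
         + \<G> (of_real (1 * x + - \<kappa>p)) - \<G> (of_real (g (1 * x + - \<kappa>p)) - \<i> * of_real \<alpha>))"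
    have x': "1 * x + - \<kappa>p = x - \<kappa>p"
      by simp
    have g: "g (x - \<kappa>p) = x" and Gc: "Gc (x - \<kappa>p) = 0"
      using x A0 g_right Gc_supp by auto
    have of1: "of_real (x - \<kappa>p) = Complex (x - \<kappa>p) 0" and of2: "of_real x - \<i> * of_real \<alpha> = Complex x (- \<alpha>)"
      by (simp_all add: complex_eq_iff)
    have "\<Xi>p x = \<Xi>m (x - \<kappa>p) + (0 + \<G> (Complex (x - \<kappa>p) 0) - \<G> (Complex x (- \<alpha>)))"
      using eq by (simp only: x' g Gc of1 of2)
    with ne show False
      by (simp add: algebra_simps)
  qed
  moreover have "negligible {x. 1 * x + - \<kappa>p \<in> {x. \<Xi>p (g x) \<noteq> \<Xi>m x + (Gc x + \<G> (of_real x) - \<G> (of_real (g x) - \<i> * of_real \<alpha>))}}"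
    by (rule negligible_affine_preimage[OF jump_negligible]) simp
  ultimately show ?thesis
    using negligible_subset by blast
qed

lemma right_end:
  "\<exists>C R. \<forall>z \<in> strip \<alpha>. R \<le> Re z \<longrightarrow>
     cmod (\<Xi> z - 0 + \<G> z) \<le> C * cmod (exp (2 * pi * \<i> / Complex \<kappa>p (- \<alpha>) * z))"
proof (rule end_estimate[where A = A0 and K = K0])
  show "\<Xi> holomorphic_on half_strip \<alpha> A0"
    by (rule holomorphic_on_subset[OF Xi_holo]) (auto simp: half_strip_def strip_def)
  show "\<G> holomorphic_on half_strip \<alpha> A0"
    by (rule holomorphic_on_subset[OF G_holo half_strip_A0_subset])
  show "continuous_on {w. - \<alpha> \<le> Im w \<and> Im w \<le> 0 \<and> A0 < Re w} \<G>"
    using closed_half_strip_A0_subset by (auto intro: continuous_on_subset[OF G_cont])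
next
  fix w assume w: "w \<in> half_strip \<alpha> A0"
  then have "w \<in> strip \<alpha>" "w \<in> closure (strip \<alpha>) \<inter> {z. \<bar>Re z\<bar> > M / 2}" "A0 < Re w"
    using half_strip_A0_subset closure_subset by (auto simp: half_strip_def)
  then have "cmod (\<Xi> w - Cm1 / w) \<le> Ca / (cmod w)\<^sup>2" "cmod (\<G> w) \<le> CG * exp (- \<rho> * Re w)"
    using Xi_asym G_decay A0 by auto
  then show "cmod (\<Xi> w - 0 + \<G> w) \<le> K0 / Re w"
    unfolding K0_def using A0 \<open>A0 < Re w\<close> \<rho>
    by (auto intro!: norm_add_le_inverse complex_Re_le_cmod)
next
  fix a b :: real assume a: "A0 < a"
  show "L2_on {a..b} \<Xi>m"
    using Xi_L2m by (simp add: L2_loc_iff_L2_on)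
  have "L2_on {a..b} (\<lambda>x. \<Xi>p (g (x + - \<kappa>p)))"
    using Xi_L2p by (intro L2_on_shift) (simp add: L2_loc_iff_L2_on)
  then show "L2_on {a..b} \<Xi>p"
    by (rule L2_on_cong) (use a A0 g_right in auto)
next
  show "negligible {x. A0 < x \<and> \<Xi>p x + \<G> (Complex x (- \<alpha>)) \<noteq> \<Xi>m (x - \<kappa>p) + \<G> (Complex (x - \<kappa>p) 0)}"
    by (rule right_jump_negligible)
qed (use \<alpha> A0 Xi_bv_lower Xi_bv_upper in auto)

definition reflect :: "complex \<Rightarrow> complex" where
  "reflect w = - w - \<i> * of_real \<alpha>"

lemma Re_reflect [simp]: "Re (reflect w) = - Re w"
  and Im_reflect [simp]: "Im (reflect w) = - \<alpha> - Im w"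
  and reflect_reflect [simp]: "reflect (reflect w) = w"
  and reflect_Complex: "reflect (Complex x y) = Complex (- x) (- \<alpha> - y)"
  by (simp_all add: reflect_def complex_eq_iff)

lemma holomorphic_on_reflect: "reflect holomorphic_on S"
  unfolding reflect_def by (intro holomorphic_intros)

lemma reflected_jump_negligible:
  "negligible {x. A0 < x \<and> \<Xi>m (- x) + (\<G> \<circ> reflect) (Complex x (- \<alpha>))
      \<noteq> \<Xi>p (- (x - \<kappa>m)) + (\<G> \<circ> reflect) (Complex (x - \<kappa>m) 0)}"
proof -
  have "{x. A0 < x \<and> \<Xi>m (- x) + (\<G> \<circ> reflect) (Complex x (- \<alpha>))
          \<noteq> \<Xi>p (- (x - \<kappa>m)) + (\<G> \<circ> reflect) (Complex (x - \<kappa>m) 0)}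
      \<subseteq> {x. (- 1) * x + 0 \<in> {x. \<Xi>p (g x) \<noteq> \<Xi>m x + (Gc x + \<G> (of_real x) - \<G> (of_real (g x) - \<i> * of_real \<alpha>))}}"
  proof safe
    fix x assume x: "A0 < x"
      and ne: "\<Xi>m (- x) + (\<G> \<circ> reflect) (Complex x (- \<alpha>)) \<noteq> \<Xi>p (- (x - \<kappa>m)) + (\<G> \<circ> reflect) (Complex (x - \<kappa>m) 0)"
      and eq: "\<Xi>p (g ((- 1) * x + 0)) = \<Xi>m ((- 1) * x + 0) + (Gc ((- 1) * x + 0)
         + \<G> (of_real ((- 1) * x + 0)) - \<G> (of_real (g ((- 1) * x + 0)) - \<i> * of_real \<alpha>))"
    have x': "(- 1) * x + 0 = - x"
      by simp
    have g: "g (- x) = \<kappa>m - x" and Gc: "Gc (- x) = 0"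
      using x A0 g_left Gc_supp by auto
    have of1: "of_real (- x) = Complex (- x) 0" and of2: "of_real (\<kappa>m - x) - \<i> * of_real \<alpha> = Complex (\<kappa>m - x) (- \<alpha>)"
      by (simp_all add: complex_eq_iff)
    have "\<Xi>p (\<kappa>m - x) = \<Xi>m (- x) + (0 + \<G> (Complex (- x) 0) - \<G> (Complex (\<kappa>m - x) (- \<alpha>)))"
      using eq by (simp only: x' g Gc of1 of2)
    with ne show False
      by (simp add: reflect_Complex algebra_simps)
  qed
  moreover have "negligible {x. (- 1) * x + 0 \<in> {x. \<Xi>p (g x) \<noteq> \<Xi>m x + (Gc x + \<G> (of_real x) - \<G> (of_real (g x) - \<i> * of_real \<alpha>))}}"
    by (rule negligible_affine_preimage[OF jump_negligible]) simp
  ultimately show ?thesis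
    using negligible_subset by blast
qed

lemma reflected_end:
  "\<exists>C R. \<forall>z \<in> strip \<alpha>. R \<le> Re z \<longrightarrow>
     cmod ((\<Xi> \<circ> reflect) z - C\<Xi> + (\<G> \<circ> reflect) z) \<le> C * cmod (exp (2 * pi * \<i> / Complex \<kappa>m (- \<alpha>) * z))"
proof (rule end_estimate[where A = A0 and K = K0 and \<Xi>m = "\<lambda>x. \<Xi>p (- x)" and \<Xi>p = "\<lambda>x. \<Xi>m (- x)"])
  show "(\<Xi> \<circ> reflect) holomorphic_on half_strip \<alpha> A0"
    by (rule holomorphic_on_compose_gen[OF holomorphic_on_reflect Xi_holo]) (auto simp: half_strip_def strip_def)
  show "(\<G> \<circ> reflect) holomorphic_on half_strip \<alpha> A0"
    using A0 M
    by (intro holomorphic_on_compose_gen[OF holomorphic_on_reflect G_holo]) (auto simp: half_strip_def strip_def)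
  have "reflect ` {w. - \<alpha> \<le> Im w \<and> Im w \<le> 0 \<and> A0 < Re w} \<subseteq> closure (strip \<alpha>)"
    using closed_strip_subset_closure[OF \<alpha>] by auto
  then show "continuous_on {w. - \<alpha> \<le> Im w \<and> Im w \<le> 0 \<and> A0 < Re w} (\<G> \<circ> reflect)"
    by (intro continuous_on_compose holomorphic_on_imp_continuous_on[OF holomorphic_on_reflect]
        continuous_on_subset[OF G_cont])
next
  fix w assume w: "w \<in> half_strip \<alpha> A0"
  then have "reflect w \<in> strip \<alpha>" "A0 < Re w"
    by (auto simp: half_strip_def strip_def)
  moreover from this have "reflect w \<in> closure (strip \<alpha>) \<inter> {z. \<bar>Re z\<bar> > M / 2}"
    using A0 M closure_subset by auto
  moreover have "Re (reflect w) \<le> - RG" "Re (reflect w) \<le> - Ra"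
    using A0 \<open>A0 < Re w\<close> by auto
  ultimately have "cmod ((\<Xi> (reflect w) - C\<Xi>) - Cm1 / reflect w) \<le> Ca / (cmod (reflect w))\<^sup>2"
      "cmod (\<G> (reflect w)) \<le> CG * cmod (exp (of_real \<rho> * reflect w))"
    using Xi_asym G_decay by blast+
  then have "cmod ((\<Xi> (reflect w) - C\<Xi>) - Cm1 / reflect w) \<le> Ca / (cmod (reflect w))\<^sup>2"
      "cmod (\<G> (reflect w)) \<le> CG * exp (- \<rho> * Re w)"
    by simp_all
  moreover have "Re w \<le> cmod (reflect w)"
    using abs_Re_le_cmod[of "reflect w"] by simp
  ultimately show "cmod ((\<Xi> \<circ> reflect) w - C\<Xi> + (\<G> \<circ> reflect) w) \<le> K0 / Re w"
    unfolding K0_def using A0 \<open>A0 < Re w\<close> \<rho> by (auto intro!: norm_add_le_inverse)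
next
  fix a b :: real assume a: "A0 < a"
  have "L2_on {- b..- a} (\<lambda>x. \<Xi>p (g (x + - \<kappa>m)))"
    using Xi_L2p by (intro L2_on_shift) (simp add: L2_loc_iff_L2_on)
  then have "L2_on {a..b} (\<lambda>x. \<Xi>p (g (- x + - \<kappa>m)))"
    by (rule L2_on_reflect)
  then show "L2_on {a..b} (\<lambda>x. \<Xi>p (- x))"
    by (rule L2_on_cong) (use a A0 g_left in auto)
  show "L2_on {a..b} (\<lambda>x. \<Xi>m (- x))"
    using Xi_L2m by (intro L2_on_reflect) (simp add: L2_loc_iff_L2_on)
  have "integral {a..b} (\<lambda>x. (cmod ((\<Xi> \<circ> reflect) (Complex x (- y)) - \<Xi>p (- x)))\<^sup>2) =
        integral {- b..- a} (\<lambda>x. (cmod (\<Xi> (Complex x (- \<alpha> + y)) - \<Xi>p x))\<^sup>2)" for y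
    using Henstock_Kurzweil_Integration.integral_reflect_real[where a = "- b" and b = "- a"
        and f = "\<lambda>x. (cmod (\<Xi> (Complex x (- \<alpha> + y)) - \<Xi>p x))\<^sup>2"]
    by (simp add: reflect_Complex)
  then show "((\<lambda>y. integral {a..b} (\<lambda>x. (cmod ((\<Xi> \<circ> reflect) (Complex x (- y)) - \<Xi>p (- x)))\<^sup>2))
      \<longlongrightarrow> 0) (at_right 0)"
    using Xi_bv_upper by simp
  have "integral {a..b} (\<lambda>x. (cmod ((\<Xi> \<circ> reflect) (Complex x (- \<alpha> + y)) - \<Xi>m (- x)))\<^sup>2) =
        integral {- b..- a} (\<lambda>x. (cmod (\<Xi> (Complex x (- y)) - \<Xi>m x))\<^sup>2)" for y
    using Henstock_Kurzweil_Integration.integral_reflect_real[where a = "- b" and b = "- a"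
        and f = "\<lambda>x. (cmod (\<Xi> (Complex x (- y)) - \<Xi>m x))\<^sup>2"]
    by (simp add: reflect_Complex)
  then show "((\<lambda>y. integral {a..b} (\<lambda>x. (cmod ((\<Xi> \<circ> reflect) (Complex x (- \<alpha> + y)) - \<Xi>m (- x)))\<^sup>2))
      \<longlongrightarrow> 0) (at_right 0)"
    using Xi_bv_lower by simp
next
  show "negligible {x. A0 < x \<and> \<Xi>m (- x) + (\<G> \<circ> reflect) (Complex x (- \<alpha>))
      \<noteq> \<Xi>p (- (x - \<kappa>m)) + (\<G> \<circ> reflect) (Complex (x - \<kappa>m) 0)}"
    by (rule reflected_jump_negligible)
qed (use \<alpha> A0 in auto)

lemma left_end:
  "\<exists>C R. \<forall>z \<in> strip \<alpha>. Re z \<le> - R \<longrightarrow>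
     cmod (\<Xi> z - C\<Xi> + \<G> z) \<le> C * cmod (exp (- (2 * pi * \<i> / Complex \<kappa>m (- \<alpha>)) * z))"
proof -
  define c where "c = 2 * pi * \<i> / Complex \<kappa>m (- \<alpha>)"
  obtain C R where CR: "\<And>z. z \<in> strip \<alpha> \<Longrightarrow> R \<le> Re z \<Longrightarrow>
      cmod ((\<Xi> \<circ> reflect) z - C\<Xi> + (\<G> \<circ> reflect) z) \<le> C * cmod (exp (c * z))"
    using reflected_end unfolding c_def by blast
  have "cmod (\<Xi> z - C\<Xi> + \<G> z) \<le> (C * cmod (exp (- c * (\<i> * of_real \<alpha>)))) * cmod (exp (- c * z))"
    if z: "z \<in> strip \<alpha>" "Re z \<le> - R" for z
  proof -
    have "cmod ((\<Xi> \<circ> reflect) (reflect z) - C\<Xi> + (\<G> \<circ> reflect) (reflect z)) \<le> C * cmod (exp (c * reflect z))"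
      using z by (intro CR) (auto simp: strip_def)
    moreover have "exp (c * reflect z) = exp (- c * (\<i> * of_real \<alpha>)) * exp (- c * z)"
      by (simp add: reflect_def algebra_simps flip: exp_add)
    ultimately show ?thesis
      by (simp add: norm_mult mult.assoc)
  qed
  then show ?thesis
    unfolding c_def by blast
qed

theorem two_sided_bound:
  "\<exists>C R. \<forall>z \<in> strip \<alpha>.
     (Re z \<ge> R \<longrightarrow> cmod (\<Xi> z + \<G> z) \<le>
        C * cmod (exp (- (2 * of_real pi / of_real \<alpha>)
              * ((- \<i> * of_real \<alpha>) / (- \<i> * of_real \<alpha> + of_real \<kappa>p)) * z))) \<and>
     (Re z \<le> - R \<longrightarrow> cmod (\<Xi> z - C\<Xi> + \<G> z) \<le>
        C * cmod (exp ((2 * of_real pi / of_real \<alpha>)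
              * ((- \<i> * of_real \<alpha>) / (- \<i> * of_real \<alpha> + of_real \<kappa>m)) * z)))"
proof -
  obtain C1 R1 where right: "\<And>z. z \<in> strip \<alpha> \<Longrightarrow> R1 \<le> Re z \<Longrightarrow>
      cmod (\<Xi> z + \<G> z) \<le> C1 * cmod (exp (2 * pi * \<i> / Complex \<kappa>p (- \<alpha>) * z))"
    using right_end by auto
  obtain C2 R2 where left: "\<And>z. z \<in> strip \<alpha> \<Longrightarrow> Re z \<le> - R2 \<Longrightarrow>
      cmod (\<Xi> z - C\<Xi> + \<G> z) \<le> C2 * cmod (exp (- (2 * pi * \<i> / Complex \<kappa>m (- \<alpha>)) * z))"
    using left_end by auto
  have rate_right: "- (2 * of_real pi / of_real \<alpha>) * ((- \<i> * of_real \<alpha>) / (- \<i> * of_real \<alpha> + of_real \<kappa>p))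
      = 2 * pi * \<i> / Complex \<kappa>p (- \<alpha>)"
    using rate_eq_periodic_frequency[OF \<alpha>, of \<kappa>p] by (metis minus_minus mult_minus_left)
  show ?thesis
  proof (rule exI[of _ "max C1 C2"], rule exI[of _ "max R1 R2"], intro ballI conjI impI)
    fix z assume z: "z \<in> strip \<alpha>"
    assume "max R1 R2 \<le> Re z"
    then have "cmod (\<Xi> z + \<G> z) \<le> C1 * cmod (exp (2 * pi * \<i> / Complex \<kappa>p (- \<alpha>) * z))"
      using right[OF z] by simp
    also have "\<dots> \<le> max C1 C2 * cmod (exp (2 * pi * \<i> / Complex \<kappa>p (- \<alpha>) * z))"
      by (intro mult_right_mono) auto
    finally show "cmod (\<Xi> z + \<G> z) \<le> max C1 C2 * cmod (exp (- (2 * of_real pi / of_real \<alpha>)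
        * ((- \<i> * of_real \<alpha>) / (- \<i> * of_real \<alpha> + of_real \<kappa>p)) * z))"
      by (simp only: rate_right)
  next
    fix z assume z: "z \<in> strip \<alpha>"
    assume "Re z \<le> - max R1 R2"
    then have "cmod (\<Xi> z - C\<Xi> + \<G> z) \<le> C2 * cmod (exp (- (2 * pi * \<i> / Complex \<kappa>m (- \<alpha>)) * z))"
      using left[OF z] by simp
    also have "\<dots> \<le> max C1 C2 * cmod (exp (- (2 * pi * \<i> / Complex \<kappa>m (- \<alpha>)) * z))"
      by (intro mult_right_mono) auto
    finally show "cmod (\<Xi> z - C\<Xi> + \<G> z) \<le> max C1 C2 * cmod (exp ((2 * of_real pi / of_real \<alpha>)
        * ((- \<i> * of_real \<alpha>) / (- \<i> * of_real \<alpha> + of_real \<kappa>m)) * z))"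
      by (simp only: rate_eq_periodic_frequency[OF \<alpha>])
  qed
qed

end

theorem lemma2p1:
  fixes \<alpha> \<kappa>m \<kappa>p M \<rho> :: real
    and g :: "real \<Rightarrow> real"
    and Gc :: "real \<Rightarrow> complex"
    and \<G> :: "complex \<Rightarrow> complex"
    and \<Xi> :: "complex \<Rightarrow> complex"
    and \<Xi>m \<Xi>p :: "real \<Rightarrow> complex"
    and C\<Xi> Cm1 :: complex
  assumes \<alpha>: "\<alpha> > 0"
    and M: "M > 0"
    and g_diffeo: "smooth_diffeo g"
    and g_left: "\<forall>x. x \<le> - M \<longrightarrow> g x = x + \<kappa>m"
    and g_right: "\<forall>x. x \<ge> M \<longrightarrow> g x = x + \<kappa>p"
    and Gc_smooth: "smooth_on UNIV Gc"
    and Gc_supp: "\<forall>x. \<bar>x\<bar> > M \<longrightarrow> Gc x = 0"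
    and G_smooth: "smooth_upto (closure (strip \<alpha>)) \<G>"
    and G_holo: "\<G> holomorphic_on (strip \<alpha> \<inter> {z. \<bar>Re z\<bar> > M / 2})"
    and \<rho>: "\<rho> > 0"
    and G_decay: "\<exists>C R. \<forall>z \<in> closure (strip \<alpha>) \<inter> {z. \<bar>Re z\<bar> > M / 2}.
            (Re z \<ge> R \<longrightarrow> cmod (\<G> z) \<le> C * cmod (exp (- of_real \<rho> * z))) \<and>
            (Re z \<le> - R \<longrightarrow> cmod (\<G> z) \<le> C * cmod (exp (of_real \<rho> * z)))"
    and Xi_holo: "\<Xi> holomorphic_on strip \<alpha>"
    and Xi_bv_lower: "\<forall>a b. ((\<lambda>y. integral {a..b} (\<lambda>x. (cmod (\<Xi> (Complex x (- y)) - \<Xi>m x))\<^sup>2))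
                              \<longlongrightarrow> 0) (at_right 0)"
    and Xi_bv_upper: "\<forall>a b. ((\<lambda>y. integral {a..b} (\<lambda>x. (cmod (\<Xi> (Complex x (- \<alpha> + y)) - \<Xi>p x))\<^sup>2))
                              \<longlongrightarrow> 0) (at_right 0)"
    and Xi_L2m: "L2_loc \<Xi>m"
    and Xi_L2p: "L2_loc (\<lambda>x. \<Xi>p (g x))"
    and Xi_jump: "AE x in lborel. \<Xi>p (g x) = \<Xi>m x + (Gc x + \<G> (of_real x) - \<G> (of_real (g x) - \<i> * of_real \<alpha>))"
    and Xi_asym: "\<exists>C R. \<forall>z \<in> strip \<alpha>.
            (Re z \<ge> R \<longrightarrow> cmod (\<Xi> z - Cm1 / z) \<le> C / (cmod z)\<^sup>2) \<and>
            (Re z \<le> - R \<longrightarrow> cmod (\<Xi> z - C\<Xi> - Cm1 / z) \<le> C / (cmod z)\<^sup>2)"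
  shows "\<exists>C R. \<forall>z \<in> strip \<alpha>.
            (Re z \<ge> R \<longrightarrow> cmod (\<Xi> z + \<G> z) \<le>
               C * cmod (exp (- (2 * of_real pi / of_real \<alpha>)
                     * ((- \<i> * of_real \<alpha>) / (- \<i> * of_real \<alpha> + of_real \<kappa>p)) * z))) \<and>
            (Re z \<le> - R \<longrightarrow> cmod (\<Xi> z - C\<Xi> + \<G> z) \<le>
               C * cmod (exp ((2 * of_real pi / of_real \<alpha>)
                     * ((- \<i> * of_real \<alpha>) / (- \<i> * of_real \<alpha> + of_real \<kappa>m)) * z)))"
proof -
  obtain Ca Ra where asym: "\<forall>z \<in> strip \<alpha>.
      (Re z \<ge> Ra \<longrightarrow> cmod (\<Xi> z - Cm1 / z) \<le> Ca / (cmod z)\<^sup>2) \<and>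
      (Re z \<le> - Ra \<longrightarrow> cmod (\<Xi> z - C\<Xi> - Cm1 / z) \<le> Ca / (cmod z)\<^sup>2)"
    using Xi_asym by blast
  obtain CG RG where decay: "\<forall>z \<in> closure (strip \<alpha>) \<inter> {z. \<bar>Re z\<bar> > M / 2}.
      (Re z \<ge> RG \<longrightarrow> cmod (\<G> z) \<le> CG * cmod (exp (- of_real \<rho> * z))) \<and>
      (Re z \<le> - RG \<longrightarrow> cmod (\<G> z) \<le> CG * cmod (exp (of_real \<rho> * z)))"
    using G_decay by blast
  interpret two_sided_problem \<alpha> \<kappa>m \<kappa>p M \<rho> CG RG Ca Ra g Gc \<G> \<Xi> \<Xi>m \<Xi>p C\<Xi> Cm1
    by unfold_locales
      (use assms asym decay continuous_on_smooth_upto[OF G_smooth] in blast)+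
  show ?thesis
    by (rule two_sided_bound)
qed

end
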